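(* Let $\mathcal{A}$ be a (finite) activation algebra and $M$ a finite set of morphisms of $\mathcal{T}_\mathcal{A}$. If $\tau\in M^\omega$ describes a path which satisfies the trace condition of $\mathcal{T}_\mathcal{A}$, then the greedy run of $\tau$ exists and is accepting.
   Context: An activation algebra $\mathcal{A}=(A,\le,\vee,0,\alpha)$ is a finite join-semilattice $(A,\le,\vee)$ with least element $0$, together with a distinguished element $\alpha\in A$ with $\alpha\neq 0$. The category $\mathcal{T}_\mathcal{A}$ has the finite sets as objects; a morphism $R\colon X\to Y$ is a relation $R\subseteq X\times A\times Y$; the composite of $R\colon X\to Y$ and $R'\colon Y\to Z$ is $R'\circ R=\{(x,c,z)\mid \exists y\in Y,\ a,b\in A:\ (x,a,y)\in R,\ (y,b,z)\in R',\ a\vee b=c\}$, and the identity is $1_X=\{(x,0,x)\mid x\in X\}$. A sequence $\tau\in M^\omega$ of morphisms describes a path if $\mathrm{cod}(\tau_i)=\mathrm{dom}(\tau_{i+1})$ for all $i$; write $P(n<m)=\tau_{m-1}\circ\cdots\circ\tau_n$ for $n<m$. Such a path satisfies the trace condition if there exist a strictly increasing sequence $k_0<k_1<\cdots$ of natural numbers and elements $s_i\in\mathrm{dom}(\tau_{k_i})$ with $(s_i,\alpha,s_{i+1})\in P(k_i<k_{i+1})$ for all $i$. Safra boards. Fix a countable set $\mathcal{C}\supseteq\omega$ of chips. A Safra board on $\mathcal{A}$ and a finite set $X$ is a pair $(\Theta,\sigma)$ where the control $\Theta\subseteq\mathcal{C}$ is a finite set with a linear order $\le$, and $\sigma\colon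 X\times A\to\mathcal{P}(\mathcal{P}(\Theta))$, such that every $\gamma\in\Theta$ belongs to some $S\in\sigma(x,a)$. The elements $S\in\sigma(x,a)$ are called stacks (bottom = $\le$-least, top = $\le$-greatest element). A chip $\gamma\in\Theta$ is covered if it is not the top element of any stack $S\in\sigma(x,a)$, for any $x,a$. Stacks are linearly ordered by $S<_\Theta S'$ iff $S$ contains the $\le$-least element of the symmetric difference $(S\setminus S')\cup(S'\setminus S)$. Transitions between boards: (i) $\tau$-successor, for $\tau\colon X\to Y$, written $(\Theta,\sigma)\xrightarrow{\tau}(\Theta',\sigma')$: first let $\sigma^*(y,a)=\{S\mid S\in\sigma(x,b)\text{ for some }x\in X,b\in A, c\in A \text{ with }(x,c,y)\in\tau\text{ and }a=b\vee c\}$ and let $\Theta^*$ be the set of chips occurring in some stack of $\sigma^*$, with the order inherited from $\Theta$. Then choose a finite linearly ordered $\Theta^\circ\subseteq\mathcal{C}\setminus\Theta$ and a bijection $\iota$ from $\{y\in Y\mid\sigma^*(y,\alpha)\neq\emptyset\}$ onto $\Theta^\circ$, and set $\sigma'(y,\alpha)=\emptyset$, $\sigma'(y,0)=\sigma^*(y,0)\cup\{S\cup\{\iota(y)\}\mid S\in\sigma^*(y,\alpha)\}$, $\sigma'(y,a)=\sigma^*(y,a)$ for $a\notin\{0,\alpha\}$, and $\Theta'=\Theta^*\oplus\Theta^\circ$ (concatenation: all elements of $\Theta^*$ below all elements of $\Theta^\circ$). (ii) Weakening $(\Theta,\sigma)\xrightarrow{W}(\Theta',\sigma')$: a board on the same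 set with $\sigma'(x,a)\subseteq\sigma(x,a)$ for all $x,a$ and $\Theta'\subseteq\Theta$ (induced order) the set of chips still occurring in stacks of $\sigma'$. (iii) Thinning $(\Theta,\sigma)\xrightarrow{T}(\Theta',\sigma')$: the weakening with $\sigma'(x,a)=\{\min_{<_\Theta}\sigma(x,a)\}$ if $\sigma(x,a)\neq\emptyset$ and $\sigma'(x,a)=\emptyset$ otherwise. (iv) $\gamma$-reset for a covered $\gamma\in\Theta$, $(\Theta,\sigma)\xrightarrow{R_\gamma}(\Theta',\sigma')$: for a stack $S$ let $S{\upharpoonright}\gamma=\{z\in S\mid z\le\gamma\}$ if $\gamma\in S$ and $S{\upharpoonright}\gamma=S$ otherwise; $\sigma'(x,a)=\{S{\upharpoonright}\gamma\mid S\in\sigma(x,a)\}$, and $\Theta'$ is the set of chips occurring in stacks of $\sigma'$. (v) Population $(\Theta,\sigma)\xrightarrow{P}(\Theta,\sigma')$: $\sigma(x,0)\subseteq\sigma'(x,0)\subseteq\sigma(x,0)\cup\{\emptyset\}$ for all $x$ and $\sigma'(x,a)=\sigma(x,a)$ for $a\neq 0$. A run of $\tau\in M^\omega$ is a sequence $(\Theta_i,\sigma_i)_{i\in\omega}$ of boards together with a strictly monotone $\iota\colon\omega\to\omega$ such that for $i=\iota(n)$ one has $(\Theta_i,\sigma_i)\xrightarrow{\tau_n}(\Theta_{i+1},\sigma_{i+1})$, and for $i$ not in the image of $\iota$ the step $(\Theta_i,\sigma_i)\to(\Theta_{i+1},\sigma_{i+1})$ is a weakening, a population, or a $\gamma$-reset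 for some $\gamma\in\Theta_i$. A run is accepting if there are $N\in\omega$ and $\gamma\in\bigcap_{n\ge N}\Theta_n$ such that the step from index $i$ to $i+1$ is a $\gamma$-reset for infinitely many $i$. A greedy $\tau$-transition from $(\Theta,\sigma)$ is the following sequence of transitions: let $\gamma_1<\dots<\gamma_k$ be all chips covered in $(\Theta,\sigma)$; perform the resets $R_{\gamma_k},R_{\gamma_{k-1}},\dots,R_{\gamma_1}$ in this order; then perform the population that replaces every $\sigma(x,0)=\emptyset$ by $\{\emptyset\}$ and changes nothing else; then a $\tau$-successor step; then the thinning. A greedy run of $\tau\in M^\omega$ is the run starting with the board $(\emptyset,\ (x,a)\mapsto\emptyset)$ on $\mathrm{dom}(\tau_0)$ and consisting of consecutive greedy $\tau_0$-, $\tau_1$-, $\tau_2$-, $\dots$ transitions. *)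

theory Defs
  imports Main
begin

(* Activation algebra: the type 'a :: {finite, bounded_semilattice_sup_bot}
   (finite join-semilattice, join = sup, least element 0 = bot) together with
   a distinguished element alpha \<noteq> bot, passed as a parameter.
   Objects of T_A: finite sets of elements of a type 'x. *)

type_synonym ('x,'a) mor = "'x set \<times> ('x \<times> 'a \<times> 'x) set \<times> 'x set"

definition mdom :: "('x,'a) mor \<Rightarrow> 'x set" where "mdom R = fst R"
definition mrel :: "('x,'a) mor \<Rightarrow> ('x \<times> 'a \<times> 'x) set" where "mrel R = fst (snd R)"
definition mcod :: "('x,'a) mor \<Rightarrow> 'x set" where "mcod R = snd (snd R)"

definition is_morphism :: "('x,'a) mor \<Rightarrow> bool" where
  "is_morphism R \<longleftrightarrow> finite (mdom R) \<and> finite (mcod R) \<and>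
     mrel R \<subseteq> mdom R \<times> UNIV \<times> mcod R"

(* composite R' o R of relations (R first, then R') *)
definition rcomp :: "('x \<times> 'a::semilattice_sup \<times> 'x) set \<Rightarrow> ('x \<times> 'a \<times> 'x) set \<Rightarrow> ('x \<times> 'a \<times> 'x) set" where
  "rcomp R R' = {(x,c,z). \<exists>y a b. (x,a,y) \<in> R \<and> (y,b,z) \<in> R' \<and> sup a b = c}"

(* seg tau n k = relation of tau_(n+k) o ... o tau_n  (k+1 morphisms) *)
fun seg :: "(nat \<Rightarrow> ('x,'a::semilattice_sup) mor) \<Rightarrow> nat \<Rightarrow> nat \<Rightarrow> ('x \<times> 'a \<times> 'x) set" where
  "seg \<tau> n 0 = mrel (\<tau> n)"
| "seg \<tau> n (Suc k) = rcomp (seg \<tau> n k) (mrel (\<tau> (n + Suc k)))"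

(* P(n<m) = tau_(m-1) o ... o tau_n, meaningful for n < m *)
definition Ppath :: "(nat \<Rightarrow> ('x,'a::semilattice_sup) mor) \<Rightarrow> nat \<Rightarrow> nat \<Rightarrow> ('x \<times> 'a \<times> 'x) set" where
  "Ppath \<tau> n m = seg \<tau> n (m - n - 1)"

definition describes_path :: "(nat \<Rightarrow> ('x,'a) mor) \<Rightarrow> bool" where
  "describes_path \<tau> \<longleftrightarrow> (\<forall>i. mcod (\<tau> i) = mdom (\<tau> (Suc i)))"

definition trace_condition :: "'a::semilattice_sup \<Rightarrow> (nat \<Rightarrow> ('x,'a) mor) \<Rightarrow> bool" where
  "trace_condition \<alpha> \<tau> \<longleftrightarrow> (\<exists>k s. strict_mono k \<and> (\<forall>i. s i \<in> mdom (\<tau> (k i))) \<and>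
      (\<forall>i. (s i, \<alpha>, s (Suc i)) \<in> Ppath \<tau> (k i) (k (Suc i))))"

(* Safra boards. Chips are natural numbers (C = nat). The control Theta with its
   linear order is a duplicate-free list (bottom first). The board also records
   the finite set X it lives on. *)
record ('x,'a) board =
  bset :: "'x set"
  ctrl :: "nat list"
  stk :: "'x \<Rightarrow> 'a \<Rightarrow> nat set set"

definition chip_le :: "nat list \<Rightarrow> nat \<Rightarrow> nat \<Rightarrow> bool" where
  "chip_le L u v \<longleftrightarrow> (\<exists>i j. i \<le> j \<and> j < length L \<and> L ! i = u \<and> L ! j = v)"

definition is_board :: "('x,'a) board \<Rightarrow> bool" where
  "is_board B \<longleftrightarrow> finite (bset B) \<and> distinct (ctrl B) \<and>
     (\<forall>x a. stk B x a \<subseteq> Pow (set (ctrl B))) \<and>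
     (\<forall>x a. x \<notin> bset B \<longrightarrow> stk B x a = {}) \<and>
     (\<forall>\<gamma>\<in>set (ctrl B). \<exists>x\<in>bset B. \<exists>a. \<exists>S\<in>stk B x a. \<gamma> \<in> S)"

definition occ :: "nat list \<Rightarrow> ('x \<Rightarrow> 'a \<Rightarrow> nat set set) \<Rightarrow> nat list" where
  "occ L \<sigma> = filter (\<lambda>\<gamma>. \<exists>x a S. S \<in> \<sigma> x a \<and> \<gamma> \<in> S) L"

definition is_top :: "nat list \<Rightarrow> nat set \<Rightarrow> nat \<Rightarrow> bool" where
  "is_top L S \<gamma> \<longleftrightarrow> \<gamma> \<in> S \<and> (\<forall>z\<in>S. chip_le L z \<gamma>)"

definition covered :: "nat \<Rightarrow> ('x,'a) board \<Rightarrow> bool" where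
  "covered \<gamma> B \<longleftrightarrow> \<gamma> \<in> set (ctrl B) \<and> \<not> (\<exists>x a S. S \<in> stk B x a \<and> is_top (ctrl B) S \<gamma>)"

definition stack_less :: "nat list \<Rightarrow> nat set \<Rightarrow> nat set \<Rightarrow> bool" where
  "stack_less L S S' \<longleftrightarrow> (\<exists>\<gamma>. \<gamma> \<in> S - S' \<and> (\<forall>z \<in> (S - S') \<union> (S' - S). chip_le L \<gamma> z))"

definition stack_min :: "nat list \<Rightarrow> nat set set \<Rightarrow> nat set" where
  "stack_min L F = (THE S. S \<in> F \<and> (\<forall>S'\<in>F. S' \<noteq> S \<longrightarrow> stack_less L S S'))"

definition succ_step :: "'a::bounded_semilattice_sup_bot \<Rightarrow> ('x,'a) mor \<Rightarrow> ('x,'a) board \<Rightarrow> ('x,'a) board \<Rightarrow> bool" where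
  "succ_step \<alpha> \<tau> B B' \<longleftrightarrow> bset B = mdom \<tau> \<and>
     (let \<sigma>s = (\<lambda>y a. {S. \<exists>x b c. (x,c,y) \<in> mrel \<tau> \<and> S \<in> stk B x b \<and> a = sup b c});
          Ls = occ (ctrl B) \<sigma>s
      in \<exists>Lo \<iota>. distinct Lo \<and> set Lo \<inter> set (ctrl B) = {} \<and>
           bij_betw \<iota> {y \<in> mcod \<tau>. \<sigma>s y \<alpha> \<noteq> {}} (set Lo) \<and>
           B' = \<lparr> bset = mcod \<tau>, ctrl = Ls @ Lo,
                  stk = (\<lambda>y a. if a = \<alpha> then {}
                               else if a = bot then \<sigma>s y bot \<union> {insert (\<iota> y) S | S. S \<in> \<sigma>s y \<alpha>}
                               else \<sigma>s y a) \<rparr>)"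

definition weak_step :: "('x,'a) board \<Rightarrow> ('x,'a) board \<Rightarrow> bool" where
  "weak_step B B' \<longleftrightarrow> bset B' = bset B \<and> (\<forall>x a. stk B' x a \<subseteq> stk B x a) \<and>
     ctrl B' = occ (ctrl B) (stk B')"

definition thin_fun :: "('x,'a) board \<Rightarrow> ('x,'a) board" where
  "thin_fun B = (let \<sigma>' = (\<lambda>x a. if stk B x a = {} then {} else {stack_min (ctrl B) (stk B x a)})
                 in \<lparr> bset = bset B, ctrl = occ (ctrl B) \<sigma>', stk = \<sigma>' \<rparr>)"

definition restr :: "nat list \<Rightarrow> nat \<Rightarrow> nat set \<Rightarrow> nat set" where
  "restr L \<gamma> S = (if \<gamma> \<in> S then {z \<in> S. chip_le L z \<gamma>} else S)"

definition reset_fun :: "nat \<Rightarrow> ('x,'a) board \<Rightarrow> ('x,'a) board" where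
  "reset_fun \<gamma> B = (let \<sigma>' = (\<lambda>x a. restr (ctrl B) \<gamma> ` stk B x a)
                    in \<lparr> bset = bset B, ctrl = occ (ctrl B) \<sigma>', stk = \<sigma>' \<rparr>)"

definition reset_step :: "nat \<Rightarrow> ('x,'a) board \<Rightarrow> ('x,'a) board \<Rightarrow> bool" where
  "reset_step \<gamma> B B' \<longleftrightarrow> covered \<gamma> B \<and> B' = reset_fun \<gamma> B"

definition pop_step :: "('x,'a::bot) board \<Rightarrow> ('x,'a) board \<Rightarrow> bool" where
  "pop_step B B' \<longleftrightarrow> bset B' = bset B \<and> ctrl B' = ctrl B \<and>
     (\<forall>x. stk B x bot \<subseteq> stk B' x bot \<and> stk B' x bot \<subseteq> stk B x bot \<union> {{}}) \<and>
     (\<forall>x a. a \<noteq> bot \<longrightarrow> stk B' x a = stk B x a)"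

definition pop_fun :: "('x,'a::bot) board \<Rightarrow> ('x,'a) board" where
  "pop_fun B = B\<lparr> stk := (\<lambda>x a. if a = bot \<and> x \<in> bset B \<and> stk B x bot = {} then {{}} else stk B x a) \<rparr>"

definition is_run :: "'a::bounded_semilattice_sup_bot \<Rightarrow> (nat \<Rightarrow> ('x,'a) mor) \<Rightarrow> (nat \<Rightarrow> ('x,'a) board) \<Rightarrow> (nat \<Rightarrow> nat) \<Rightarrow> bool" where
  "is_run \<alpha> \<tau> b \<iota> \<longleftrightarrow> strict_mono \<iota> \<and> (\<forall>i. is_board (b i)) \<and>
     (\<forall>n. succ_step \<alpha> (\<tau> n) (b (\<iota> n)) (b (Suc (\<iota> n)))) \<and>
     (\<forall>i. i \<notin> range \<iota> \<longrightarrow> weak_step (b i) (b (Suc i)) \<or> pop_step (b i) (b (Suc i)) \<or>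
           (\<exists>\<gamma>\<in>set (ctrl (b i)). reset_step \<gamma> (b i) (b (Suc i))))"

definition accepting :: "(nat \<Rightarrow> ('x,'a) board) \<Rightarrow> bool" where
  "accepting b \<longleftrightarrow> (\<exists>N \<gamma>. (\<forall>n\<ge>N. \<gamma> \<in> set (ctrl (b n))) \<and>
      infinite {i. reset_step \<gamma> (b i) (b (Suc i))})"

(* Bs = boards visited by a greedy tau-transition starting from B:
   B = B_0 -R-> B_1 ... -R-> B_k -P-> B_(k+1) -tau-> B_(k+2) -T-> B_(k+3) *)
definition greedy_trans :: "'a::bounded_semilattice_sup_bot \<Rightarrow> ('x,'a) mor \<Rightarrow> ('x,'a) board \<Rightarrow> ('x,'a) board list \<Rightarrow> bool" where
  "greedy_trans \<alpha> \<tau> B Bs \<longleftrightarrow>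
     (let cs = rev (filter (\<lambda>\<gamma>. covered \<gamma> B) (ctrl B)); k = length cs in
      length Bs = k + 4 \<and> Bs ! 0 = B \<and>
      (\<forall>j<k. Bs ! Suc j = reset_fun (cs ! j) (Bs ! j)) \<and>
      Bs ! (k + 1) = pop_fun (Bs ! k) \<and>
      succ_step \<alpha> \<tau> (Bs ! (k + 1)) (Bs ! (k + 2)) \<and>
      Bs ! (k + 3) = thin_fun (Bs ! (k + 2)))"

definition empty_board :: "'x set \<Rightarrow> ('x,'a) board" where
  "empty_board X = \<lparr> bset = X, ctrl = [], stk = (\<lambda>x a. {}) \<rparr>"

definition greedy_run :: "'a::bounded_semilattice_sup_bot \<Rightarrow> (nat \<Rightarrow> ('x,'a) mor) \<Rightarrow> (nat \<Rightarrow> ('x,'a) board) \<Rightarrow> (nat \<Rightarrow> nat) \<Rightarrow> bool" where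
  "greedy_run \<alpha> \<tau> b \<iota> \<longleftrightarrow> is_run \<alpha> \<tau> b \<iota> \<and> b 0 = empty_board (mdom (\<tau> 0)) \<and>
     (\<exists>p. p 0 = 0 \<and> (\<forall>n. greedy_trans \<alpha> (\<tau> n) (b (p n)) (map b [p n ..< Suc (p (Suc n))]) \<and>
                          \<iota> n = p (Suc n) - 2))"

end

theory Submission
  imports Defs
begin

text \<open>
  Follow the trace provided by the trace condition through the greedy run. At the start of
  block \<open>n\<close> the trace sits at a vertex \<open>V n\<close> with accumulated activation \<open>a\<^sub>n\<close>; the cell
  \<open>(V n, a\<^sub>n)\<close> of the board is nonempty and, the board being thinned, holds exactly one stack.
  Whenever the activation along the trace completes to \<open>\<alpha>\<close>, the successor step pushes a fresh
  chip onto this stack.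

  Suppose the run is not accepting, so every chip that stays in the control forever is reset
  only finitely often. Then there are arbitrarily large sets \<open>G\<close> of chips that eventually form
  the bottom of the trace's stack and are never covered: the position in the control of the
  first chip above \<open>G\<close> never increases, so eventually it is a fixed chip; that chip survives
  forever and, being reset only finitely often, is eventually uncovered. But an uncovered chip
  is the top of some stack, and on a thinned board distinct stacks lie in distinct cells, so a
  board on \<open>X\<close> has at most \<open>|X| \<cdot> |A|\<close> uncovered chips, a bound uniform in the run since
  \<open>M\<close> is finite.
\<close>

section \<open>Positions in control lists\<close>

fun index :: "'a list \<Rightarrow> 'a \<Rightarrow> nat" where
  "index [] u = 0"
| "index (x # L) u = (if x = u then 0 else Suc (index L u))"

lemma index_less_length: "u \<in> set L \<Longrightarrow> index L u < length L"
  by (induction L) auto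

lemma nth_index: "u \<in> set L \<Longrightarrow> L ! index L u = u"
  by (induction L) auto

lemma index_nth: "distinct L \<Longrightarrow> i < length L \<Longrightarrow> index L (L ! i) = i"
  by (induction L arbitrary: i) (auto simp: less_Suc_eq_0_disj)

lemma index_inj: "u \<in> set L \<Longrightarrow> v \<in> set L \<Longrightarrow> index L u = index L v \<Longrightarrow> u = v"
  by (metis nth_index)

lemma index_append:
  "index (A @ B) u = (if u \<in> set A then index A u else length A + index B u)"
  by (induction A) auto

lemma index_filter_le: "u \<in> set (filter P L) \<Longrightarrow> index (filter P L) u \<le> index L u"
  by (induction L) auto

lemma index_filter_le_iff:
  "distinct L \<Longrightarrow> u \<in> set (filter P L) \<Longrightarrow> v \<in> set (filter P L) \<Longrightarrow>
   index (filter P L) u \<le> index (filter P L) v \<longleftrightarrow> index L u \<le> index L v"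
  by (induction L) (auto split: if_splits)

lemma chip_le_index:
  "distinct L \<Longrightarrow> chip_le L u v \<longleftrightarrow> u \<in> set L \<and> v \<in> set L \<and> index L u \<le> index L v"
  unfolding chip_le_def
  by (metis index_less_length index_nth le_less_trans nth_index nth_mem)

lemma chip_le_filter:
  "distinct L \<Longrightarrow> chip_le (filter P L) u v \<longleftrightarrow> chip_le L u v \<and> P u \<and> P v"
  using index_filter_le_iff[of L u P v] by (auto simp: chip_le_index)

definition first_in :: "'a list \<Rightarrow> 'a set \<Rightarrow> 'a \<Rightarrow> bool" where
  "first_in L X d \<longleftrightarrow> d \<in> X \<and> (\<forall>z\<in>X. index L d \<le> index L z)"

lemma first_in_exists: "finite X \<Longrightarrow> X \<noteq> {} \<Longrightarrow> \<exists>d. first_in L X d"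
proof -
  assume "finite X" "X \<noteq> {}"
  then obtain d where "d \<in> X" "index L d = Min (index L ` X)"
    by (metis (mono_tags, lifting) Min_in empty_is_image finite_imageI imageE)
  then show ?thesis unfolding first_in_def using \<open>finite X\<close> by auto
qed

lemma first_in_unique: "X \<subseteq> set L \<Longrightarrow> first_in L X d \<Longrightarrow> first_in L X d' \<Longrightarrow> d = d'"
  unfolding first_in_def by (meson antisym index_inj subsetD)

section \<open>The order on stacks\<close>

lemma stack_less_iff_agree_below:
  assumes L: "distinct L" "S \<subseteq> set L" "S' \<subseteq> set L"
  shows "stack_less L S S' \<longleftrightarrow>
    (\<exists>g\<in>S - S'. \<forall>z\<in>set L. index L z < index L g \<longrightarrow> (z \<in> S \<longleftrightarrow> z \<in> S'))"
proof
  assume "stack_less L S S'"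
  then obtain g where g: "g \<in> S - S'" "\<forall>z\<in>(S - S') \<union> (S' - S). chip_le L g z"
    unfolding stack_less_def by blast
  have "z \<in> S \<longleftrightarrow> z \<in> S'" if "index L z < index L g" for z
  proof (rule ccontr)
    assume "\<not> (z \<in> S \<longleftrightarrow> z \<in> S')"
    then have "chip_le L g z" using g(2) by blast
    then show False using that chip_le_index[OF L(1)] by simp
  qed
  then show "\<exists>g\<in>S - S'. \<forall>z\<in>set L. index L z < index L g \<longrightarrow> (z \<in> S \<longleftrightarrow> z \<in> S')"
    using g(1) by blast
next
  assume "\<exists>g\<in>S - S'. \<forall>z\<in>set L. index L z < index L g \<longrightarrow> (z \<in> S \<longleftrightarrow> z \<in> S')"
  then obtain g where g: "g \<in> S - S'" "\<forall>z\<in>set L. index L z < index L g \<longrightarrow> (z \<in> S \<longleftrightarrow> z \<in> S')"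
    by blast
  have "chip_le L g z" if "z \<in> (S - S') \<union> (S' - S)" for z
  proof -
    have "z \<in> set L" "g \<in> set L" using that g(1) L by auto
    moreover have "\<not> index L z < index L g" using that g(2) \<open>z \<in> set L\<close> by blast
    ultimately show ?thesis using chip_le_index[OF L(1)] by simp
  qed
  then show "stack_less L S S'" unfolding stack_less_def using g(1) by blast
qed

lemma stack_less_asym:
  assumes L: "distinct L" "S \<subseteq> set L" "S' \<subseteq> set L" and "stack_less L S S'"
  shows "\<not> stack_less L S' S"
proof
  assume "stack_less L S' S"
  obtain g h where
    g: "g \<in> S - S'" "\<forall>z\<in>set L. index L z < index L g \<longrightarrow> (z \<in> S \<longleftrightarrow> z \<in> S')" and
    h: "h \<in> S' - S" "\<forall>z\<in>set L. index L z < index L h \<longrightarrow> (z \<in> S' \<longleftrightarrow> z \<in> S)"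
    using assms \<open>stack_less L S' S\<close> stack_less_iff_agree_below by metis
  have in_L: "g \<in> set L" "h \<in> set L" using g(1) h(1) L by auto
  then have "index L g \<noteq> index L h" using g(1) h(1) index_inj by fastforce
  then consider "index L g < index L h" | "index L h < index L g" by linarith
  then show False
    by cases (use g h in_L in blast)+
qed

lemma stack_less_total:
  assumes L: "distinct L" "S \<subseteq> set L" "S' \<subseteq> set L" and "S \<noteq> S'"
  shows "stack_less L S S' \<or> stack_less L S' S"
proof -
  let ?D = "(S - S') \<union> (S' - S)"
  have "finite ?D" using L(2,3) by (meson finite_Diff finite_UnI finite_set rev_finite_subset)
  moreover have "?D \<noteq> {}" using \<open>S \<noteq> S'\<close> by blast
  ultimately obtain g where "first_in L ?D g" using first_in_exists by blast
  then have g: "g \<in> ?D" "\<forall>z\<in>?D. index L g \<le> index L z" unfolding first_in_def by auto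
  have agree: "\<forall>z\<in>set L. index L z < index L g \<longrightarrow> (z \<in> S \<longleftrightarrow> z \<in> S')"
    using g(2) by (meson DiffI UnI1 UnI2 not_le)
  show ?thesis
  proof (cases "g \<in> S")
    case True
    then have "g \<in> S - S'" using g(1) by blast
    then have "stack_less L S S'" using agree stack_less_iff_agree_below[OF L] by blast
    then show ?thesis ..
  next
    case False
    then have "g \<in> S' - S" using g(1) by blast
    then have "stack_less L S' S" using agree stack_less_iff_agree_below[OF L(1,3,2)] by blast
    then show ?thesis ..
  qed
qed

lemma stack_less_trans:
  assumes L: "distinct L" "S \<subseteq> set L" "S' \<subseteq> set L" "S'' \<subseteq> set L"
    and "stack_less L S S'" "stack_less L S' S''"
  shows "stack_less L S S''"
proof -
  obtain g h where
    g: "g \<in> S - S'" "\<forall>z\<in>set L. index L z < index L g \<longrightarrow> (z \<in> S \<longleftrightarrow> z \<in> S')" and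
    h: "h \<in> S' - S''" "\<forall>z\<in>set L. index L z < index L h \<longrightarrow> (z \<in> S' \<longleftrightarrow> z \<in> S'')"
    using assms stack_less_iff_agree_below by metis
  have in_L: "g \<in> set L" "h \<in> set L" using g(1) h(1) L by auto
  then have "index L g \<noteq> index L h" using g(1) h(1) index_inj by fastforce
  then consider "index L g < index L h" | "index L h < index L g" by linarith
  then show ?thesis
  proof cases
    case 1
    then have "g \<in> S - S''" using g(1) h(2) in_L by blast
    moreover have "\<forall>z\<in>set L. index L z < index L g \<longrightarrow> (z \<in> S \<longleftrightarrow> z \<in> S'')"
      using g(2) h(2) 1 by force
    ultimately show ?thesis using stack_less_iff_agree_below[OF L(1,2,4)] by blast
  next
    case 2
    then have "h \<in> S - S''" using h(1) g(2) in_L by blast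
    moreover have "\<forall>z\<in>set L. index L z < index L h \<longrightarrow> (z \<in> S \<longleftrightarrow> z \<in> S'')"
      using g(2) h(2) 2 by force
    ultimately show ?thesis using stack_less_iff_agree_below[OF L(1,2,4)] by blast
  qed
qed

lemma stack_less_least_exists:
  assumes L: "distinct L" and "finite F" "F \<noteq> {}" "\<forall>S\<in>F. S \<subseteq> set L"
  shows "\<exists>S\<in>F. \<forall>S'\<in>F. S' \<noteq> S \<longrightarrow> stack_less L S S'"
  using assms(2-4)
proof (induction F rule: finite_ne_induct)
  case (singleton x) then show ?case by simp
next
  case (insert x F)
  then obtain m where m: "m \<in> F" "\<forall>S'\<in>F. S' \<noteq> m \<longrightarrow> stack_less L m S'" by auto
  show ?case
  proof (cases "x = m \<or> stack_less L m x")
    case True then show ?thesis using m by auto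
  next
    case False
    then have "stack_less L x m" using stack_less_total[OF L] insert.prems m(1) by blast
    then have "\<forall>S'\<in>F. S' \<noteq> x \<longrightarrow> stack_less L x S'"
      using m insert.prems stack_less_trans[OF L] by (metis insert_iff)
    then show ?thesis by blast
  qed
qed

lemma stack_min_least:
  assumes L: "distinct L" and F: "finite F" "F \<noteq> {}" "\<forall>S\<in>F. S \<subseteq> set L"
  shows "stack_min L F \<in> F \<and> (\<forall>S'\<in>F. S' \<noteq> stack_min L F \<longrightarrow> stack_less L (stack_min L F) S')"
proof -
  obtain m where m: "m \<in> F" "\<forall>S'\<in>F. S' \<noteq> m \<longrightarrow> stack_less L m S'"
    using stack_less_least_exists[OF assms] by blast
  have unique: "S = m" if "S \<in> F" "\<forall>S'\<in>F. S' \<noteq> S \<longrightarrow> stack_less L S S'" for S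
    using that m stack_less_asym[OF L] F(3) by metis
  have "stack_min L F = m" unfolding stack_min_def
    by (rule the_equality) (use m unique in blast)+
  then show ?thesis using m by simp
qed

section \<open>Board operations\<close>

lemma board_stack_subset: "is_board B \<Longrightarrow> S \<in> stk B x a \<Longrightarrow> S \<subseteq> set (ctrl B)"
  unfolding is_board_def by blast

lemma board_cell_finite: "is_board B \<Longrightarrow> finite (stk B x a)"
  unfolding is_board_def by (meson finite_Pow_iff finite_set finite_subset)

lemma board_cell_outside: "is_board B \<Longrightarrow> x \<notin> bset B \<Longrightarrow> stk B x a = {}"
  unfolding is_board_def by blast

lemma board_ctrl_iff: "is_board B \<Longrightarrow> g \<in> set (ctrl B) \<longleftrightarrow> (\<exists>x a S. S \<in> stk B x a \<and> g \<in> S)"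
  unfolding is_board_def by blast

lemma set_occ: "set (occ L \<sigma>) = {g \<in> set L. \<exists>x a S. S \<in> \<sigma> x a \<and> g \<in> S}"
  unfolding occ_def by auto

lemma is_board_occ:
  assumes "finite X" "distinct L" "\<And>x a S. S \<in> \<sigma> x a \<Longrightarrow> S \<subseteq> set L"
    "\<And>x a. x \<notin> X \<Longrightarrow> \<sigma> x a = {}"
  shows "is_board \<lparr>bset = X, ctrl = occ L \<sigma>, stk = \<sigma>\<rparr>"
  using assms unfolding is_board_def set_occ by (auto simp: occ_def) blast+

lemma thin_fun_simps:
  "bset (thin_fun B) = bset B" "ctrl (thin_fun B) = occ (ctrl B) (stk (thin_fun B))"
  "stk (thin_fun B) x a = (if stk B x a = {} then {} else {stack_min (ctrl B) (stk B x a)})"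
  unfolding thin_fun_def by (simp_all add: Let_def)

lemma thin_fun_least:
  assumes "is_board B" "stk B x a \<noteq> {}"
  shows "stk (thin_fun B) x a = {stack_min (ctrl B) (stk B x a)}"
    "stack_min (ctrl B) (stk B x a) \<in> stk B x a"
    "\<forall>S'\<in>stk B x a. S' \<noteq> stack_min (ctrl B) (stk B x a) \<longrightarrow>
       stack_less (ctrl B) (stack_min (ctrl B) (stk B x a)) S'"
  using assms stack_min_least[of "ctrl B" "stk B x a"]
  by (auto simp: thin_fun_simps is_board_def board_cell_finite)

lemma thin_fun_subset: "is_board B \<Longrightarrow> stk (thin_fun B) x a \<subseteq> stk B x a"
  using thin_fun_least[of B x a] by (cases "stk B x a = {}") (auto simp: thin_fun_simps)

lemma thin_fun_single: "S \<in> stk (thin_fun B) x a \<Longrightarrow> S' \<in> stk (thin_fun B) x a \<Longrightarrow> S = S'"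
  by (simp add: thin_fun_simps split: if_splits)

lemma thin_fun_board: "is_board B \<Longrightarrow> is_board (thin_fun B) \<and> weak_step B (thin_fun B)"
proof -
  assume B: "is_board B"
  have "thin_fun B = \<lparr>bset = bset B, ctrl = occ (ctrl B) (stk (thin_fun B)), stk = stk (thin_fun B)\<rparr>"
    by (simp add: thin_fun_simps)
  also have "is_board \<dots>"
  proof (rule is_board_occ)
    show "finite (bset B)" "distinct (ctrl B)" using B by (simp_all add: is_board_def)
  qed (use thin_fun_subset[OF B] board_stack_subset[OF B] board_cell_outside[OF B] in blast)+
  finally show ?thesis
    using thin_fun_subset[OF B] unfolding weak_step_def by (simp add: thin_fun_simps)
qed

lemma mem_restr: "z \<in> restr L c T \<longleftrightarrow> z \<in> T \<and> (c \<in> T \<longrightarrow> chip_le L z c)"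
  unfolding restr_def by auto

lemma reset_fun_simps:
  "bset (reset_fun g B) = bset B" "ctrl (reset_fun g B) = occ (ctrl B) (stk (reset_fun g B))"
  "stk (reset_fun g B) x a = restr (ctrl B) g ` stk B x a"
  unfolding reset_fun_def by (simp_all add: Let_def)

lemma reset_fun_board: "is_board B \<Longrightarrow> is_board (reset_fun g B)"
proof -
  assume B: "is_board B"
  have "reset_fun g B =
      \<lparr>bset = bset B, ctrl = occ (ctrl B) (stk (reset_fun g B)), stk = stk (reset_fun g B)\<rparr>"
    by (simp add: reset_fun_simps)
  also have "is_board \<dots>"
  proof (rule is_board_occ)
    show "finite (bset B)" "distinct (ctrl B)" using B by (simp_all add: is_board_def)
  qed (use board_stack_subset[OF B] board_cell_outside[OF B] in \<open>fastforce simp: reset_fun_simps mem_restr\<close>)+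
  finally show ?thesis .
qed

lemma reset_keeps_lower_covered:
  assumes B: "is_board B" and c: "covered g' B" and g: "g \<in> set (ctrl B)"
    and below: "index (ctrl B) g' < index (ctrl B) g"
  shows "covered g' (reset_fun g B)"
proof -
  let ?L = "ctrl B"
  have L: "distinct ?L" using B by (simp add: is_board_def)
  have g': "g' \<in> set ?L" using c by (simp add: covered_def)
  have ctrl_filter: "ctrl (reset_fun g B) = filter (\<lambda>\<gamma>. \<exists>x a S. S \<in> stk (reset_fun g B) x a \<and> \<gamma> \<in> S) ?L"
    by (simp add: reset_fun_simps occ_def)
  obtain x a S where S: "S \<in> stk B x a" "g' \<in> S" using g' board_ctrl_iff[OF B] by blast
  have "g' \<in> restr ?L g S" using S g g' below L by (auto simp: mem_restr chip_le_index)
  then have in_ctrl: "g' \<in> set (ctrl (reset_fun g B))"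
    using S(1) board_ctrl_iff[OF reset_fun_board[OF B]] by (auto simp: reset_fun_simps)
  have "\<not> is_top (ctrl (reset_fun g B)) T g'" if T: "T \<in> stk (reset_fun g B) x a" for x a T
  proof
    assume top: "is_top (ctrl (reset_fun g B)) T g'"
    then have top_L: "g' \<in> T" "\<forall>z\<in>T. chip_le ?L z g'"
      unfolding is_top_def ctrl_filter chip_le_filter[OF L] by auto
    obtain S where S: "S \<in> stk B x a" "T = restr ?L g S" using T by (auto simp: reset_fun_simps)
    show False
    proof (cases "g \<in> S")
      case True
      then have "g \<in> T" using S g L by (auto simp: mem_restr chip_le_index)
      then show False using top_L below L by (auto simp: chip_le_index)
    next
      case False
      then have "is_top ?L S g'" using S top_L by (simp add: restr_def is_top_def)
      then show False using c S(1) by (auto simp: covered_def)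
    qed
  qed
  then show ?thesis using in_ctrl by (auto simp: covered_def)
qed

lemma pop_fun_simps:
  "bset (pop_fun B) = bset B" "ctrl (pop_fun B) = ctrl B"
  "stk (pop_fun B) x a = (if a = bot \<and> x \<in> bset B \<and> stk B x bot = {} then {{}} else stk B x a)"
  by (simp_all add: pop_fun_def)

lemma pop_fun_board: "is_board B \<Longrightarrow> is_board (pop_fun B) \<and> pop_step B (pop_fun B)"
proof -
  assume B: "is_board B"
  have "\<exists>x\<in>bset B. \<exists>a. \<exists>S\<in>stk (pop_fun B) x a. g \<in> S" if "g \<in> set (ctrl B)" for g
    using that B unfolding is_board_def pop_fun_simps by (metis empty_iff)
  then have "is_board (pop_fun B)"
    using B unfolding is_board_def pop_fun_simps by auto
  moreover have "pop_step B (pop_fun B)" unfolding pop_step_def by (auto simp: pop_fun_simps)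
  ultimately show ?thesis by simp
qed

definition sigma_star :: "('x,'a::sup) mor \<Rightarrow> ('x,'a) board \<Rightarrow> 'x \<Rightarrow> 'a \<Rightarrow> nat set set" where
  "sigma_star \<tau> B = (\<lambda>y a. {S. \<exists>x b c. (x,c,y) \<in> mrel \<tau> \<and> S \<in> stk B x b \<and> a = sup b c})"

definition succ_stk ::
  "'a::bounded_semilattice_sup_bot \<Rightarrow> ('x,'a) mor \<Rightarrow> ('x,'a) board \<Rightarrow> ('x \<Rightarrow> nat) \<Rightarrow> 'x \<Rightarrow> 'a \<Rightarrow> nat set set"
where
  "succ_stk \<alpha> \<tau> B \<iota> = (\<lambda>y a. if a = \<alpha> then {}
     else if a = bot then sigma_star \<tau> B y bot \<union> {insert (\<iota> y) S | S. S \<in> sigma_star \<tau> B y \<alpha>}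
     else sigma_star \<tau> B y a)"

lemma succ_step_iff: "succ_step \<alpha> \<tau> B B' \<longleftrightarrow> bset B = mdom \<tau> \<and>
   (\<exists>Lo \<iota>. distinct Lo \<and> set Lo \<inter> set (ctrl B) = {} \<and>
      bij_betw \<iota> {y \<in> mcod \<tau>. sigma_star \<tau> B y \<alpha> \<noteq> {}} (set Lo) \<and>
      B' = \<lparr>bset = mcod \<tau>, ctrl = occ (ctrl B) (sigma_star \<tau> B) @ Lo, stk = succ_stk \<alpha> \<tau> B \<iota>\<rparr>)"
  unfolding succ_step_def sigma_star_def succ_stk_def Let_def by simp

lemma sigma_star_outside: "is_morphism \<tau> \<Longrightarrow> y \<notin> mcod \<tau> \<Longrightarrow> sigma_star \<tau> B y a = {}"
  unfolding sigma_star_def is_morphism_def by blast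

lemma sigma_star_subset:
  "is_board B \<Longrightarrow> S \<in> sigma_star \<tau> B y a \<Longrightarrow> S \<subseteq> set (occ (ctrl B) (sigma_star \<tau> B))"
  unfolding set_occ using board_stack_subset by (fastforce simp: sigma_star_def)

lemma succ_stk_cases:
  "T \<in> succ_stk \<alpha> \<tau> B \<iota> y a \<Longrightarrow>
     T \<in> sigma_star \<tau> B y a \<or> (\<exists>S \<in> sigma_star \<tau> B y \<alpha>. T = insert (\<iota> y) S)"
  unfolding succ_stk_def by (auto split: if_splits)

lemma succ_stk_moves:
  "\<alpha> \<noteq> bot \<Longrightarrow> S \<in> sigma_star \<tau> B y a \<Longrightarrow>
     (if a = \<alpha> then insert (\<iota> y) S \<in> succ_stk \<alpha> \<tau> B \<iota> y bot else S \<in> succ_stk \<alpha> \<tau> B \<iota> y a)"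
  unfolding succ_stk_def by auto

lemma succ_stk_chip_occurs:
  assumes \<tau>: "is_morphism \<tau>" and "\<alpha> \<noteq> bot"
    and \<iota>: "bij_betw \<iota> {y \<in> mcod \<tau>. sigma_star \<tau> B y \<alpha> \<noteq> {}} (set Lo)"
    and h: "h \<in> set (occ (ctrl B) (sigma_star \<tau> B) @ Lo)"
  shows "\<exists>y\<in>mcod \<tau>. \<exists>a. \<exists>T\<in>succ_stk \<alpha> \<tau> B \<iota> y a. h \<in> T"
proof (cases "h \<in> set Lo")
  case True
  then have "h \<in> \<iota> ` {y \<in> mcod \<tau>. sigma_star \<tau> B y \<alpha> \<noteq> {}}" using \<iota> by (simp add: bij_betw_def)
  then obtain y S where y: "y \<in> mcod \<tau>" "S \<in> sigma_star \<tau> B y \<alpha>" "\<iota> y = h" by blast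
  then have "insert h S \<in> succ_stk \<alpha> \<tau> B \<iota> y bot" using succ_stk_moves[OF \<open>\<alpha> \<noteq> bot\<close> y(2), of \<iota>] by simp
  then show ?thesis using y(1) by blast
next
  case False
  then have "h \<in> set (occ (ctrl B) (sigma_star \<tau> B))" using h by simp
  then obtain y a S where S: "S \<in> sigma_star \<tau> B y a" "h \<in> S" unfolding set_occ by blast
  then have "y \<in> mcod \<tau>" using sigma_star_outside[OF \<tau>] by blast
  moreover have "\<exists>T\<in>succ_stk \<alpha> \<tau> B \<iota> y (if a = \<alpha> then bot else a). h \<in> T"
    using S succ_stk_moves[OF \<open>\<alpha> \<noteq> bot\<close> S(1), of \<iota>] by (cases "a = \<alpha>") auto
  ultimately show ?thesis by blast
qed

lemma succ_step_board:
  assumes B: "is_board B" and \<tau>: "is_morphism \<tau>" and "\<alpha> \<noteq> bot" and succ: "succ_step \<alpha> \<tau> B B'"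
  shows "is_board B'"
proof -
  obtain Lo \<iota> where Lo: "distinct Lo" "set Lo \<inter> set (ctrl B) = {}"
    "bij_betw \<iota> {y \<in> mcod \<tau>. sigma_star \<tau> B y \<alpha> \<noteq> {}} (set Lo)"
    and B': "B' = \<lparr>bset = mcod \<tau>, ctrl = occ (ctrl B) (sigma_star \<tau> B) @ Lo, stk = succ_stk \<alpha> \<tau> B \<iota>\<rparr>"
    using succ unfolding succ_step_iff by blast
  have fresh: "\<iota> y \<in> set Lo" if "S \<in> sigma_star \<tau> B y \<alpha>" for S y
  proof -
    have "y \<in> mcod \<tau>" using that sigma_star_outside[OF \<tau>] by blast
    then show ?thesis using that Lo(3) bij_betwE by blast
  qed
  have "T \<subseteq> set (ctrl B')" if "T \<in> stk B' y a" for T y a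
  proof -
    have "T \<in> sigma_star \<tau> B y a \<or> (\<exists>S \<in> sigma_star \<tau> B y \<alpha>. T = insert (\<iota> y) S)"
      using that succ_stk_cases unfolding B' by simp
    then show ?thesis
      using sigma_star_subset[OF B, of _ \<tau> y a] sigma_star_subset[OF B, of _ \<tau> y \<alpha>] fresh
      unfolding B' by auto
  qed
  then have "stk B' y a \<subseteq> Pow (set (ctrl B'))" for y a by blast
  moreover have "set (occ (ctrl B) (sigma_star \<tau> B)) \<subseteq> set (ctrl B)" by (simp add: occ_def)
  then have "distinct (ctrl B')" using Lo(1,2) B unfolding B' by (auto simp: occ_def is_board_def)
  moreover have "stk B' y a = {}" if "y \<notin> bset B'" for y a
    using that sigma_star_outside[OF \<tau>] unfolding B' by (simp add: succ_stk_def)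
  moreover have "finite (bset B')" using \<tau> unfolding B' by (simp add: is_morphism_def)
  moreover have "\<exists>y\<in>bset B'. \<exists>a. \<exists>T\<in>stk B' y a. h \<in> T" if "h \<in> set (ctrl B')" for h
    using succ_stk_chip_occurs[OF \<tau> \<open>\<alpha> \<noteq> bot\<close> Lo(3)] that unfolding B' by simp
  ultimately show ?thesis unfolding is_board_def by simp
qed

lemma succ_step_exists:
  assumes \<tau>: "is_morphism \<tau>" and "bset B = mdom \<tau>"
  shows "\<exists>B'. succ_step \<alpha> \<tau> B B'"
proof -
  let ?Y = "{y \<in> mcod \<tau>. sigma_star \<tau> B y \<alpha> \<noteq> {}}"
  have "finite ?Y" using \<tau> by (simp add: is_morphism_def)
  then obtain h where h: "bij_betw h ?Y {0..<card ?Y}" using ex_bij_betw_finite_nat by blast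
  define m0 where "m0 = Suc (Max (insert 0 (set (ctrl B))))"
  have above: "\<forall>z\<in>set (ctrl B). z < m0" unfolding m0_def by (simp add: le_imp_less_Suc)
  define Lo where "Lo = [m0..<m0 + card ?Y]"
  have "bij_betw (\<lambda>n. m0 + n) {0..<card ?Y} (set Lo)"
    unfolding Lo_def bij_betw_def by (auto simp: inj_on_def image_iff)
  then have "bij_betw ((\<lambda>n. m0 + n) \<circ> h) ?Y (set Lo)" using h bij_betw_trans by blast
  moreover have "set Lo \<inter> set (ctrl B) = {}" using above unfolding Lo_def by force
  moreover have "distinct Lo" unfolding Lo_def by simp
  ultimately show ?thesis unfolding succ_step_iff using assms(2) by blast
qed

text \<open>
  The activation carried along an edge labelled \<open>w\<close>: reaching \<open>\<alpha>\<close> wraps around to \<open>0\<close>, which is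
  exactly when the successor step pushes a fresh chip (see \<open>succ_step_follows_edge\<close>).
\<close>

definition next_activation :: "'a::bounded_semilattice_sup_bot \<Rightarrow> 'a \<Rightarrow> 'a \<Rightarrow> 'a" where
  "next_activation \<alpha> a w = (if sup a w = \<alpha> then bot else sup a w)"

lemma succ_step_follows_edge:
  assumes B: "is_board B" and \<tau>: "is_morphism \<tau>" and "\<alpha> \<noteq> bot" and succ: "succ_step \<alpha> \<tau> B B'"
    and T: "T \<in> stk B v a" and e: "(v, w, v') \<in> mrel \<tau>"
  shows "\<exists>C\<in>stk B' v' (next_activation \<alpha> a w). T \<subseteq> C \<and>
           (sup a w = \<alpha> \<longrightarrow> (\<exists>n. n \<notin> set (ctrl B) \<and> C = insert n T))"
    and "\<exists>Lo. ctrl B' = occ (ctrl B) (sigma_star \<tau> B) @ Lo"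
    and "T \<subseteq> set (occ (ctrl B) (sigma_star \<tau> B))"
proof -
  obtain Lo \<iota> where Lo: "set Lo \<inter> set (ctrl B) = {}"
    "bij_betw \<iota> {y \<in> mcod \<tau>. sigma_star \<tau> B y \<alpha> \<noteq> {}} (set Lo)"
    and B': "B' = \<lparr>bset = mcod \<tau>, ctrl = occ (ctrl B) (sigma_star \<tau> B) @ Lo, stk = succ_stk \<alpha> \<tau> B \<iota>\<rparr>"
    using succ unfolding succ_step_iff by blast
  have Tsig: "T \<in> sigma_star \<tau> B v' (sup a w)" using T e unfolding sigma_star_def by blast
  have "v' \<in> mcod \<tau>" using e \<tau> unfolding is_morphism_def by blast
  then have "sup a w = \<alpha> \<Longrightarrow> \<iota> v' \<notin> set (ctrl B)"
    using Tsig Lo bij_betwE by fastforce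
  then show "\<exists>C\<in>stk B' v' (next_activation \<alpha> a w). T \<subseteq> C \<and>
           (sup a w = \<alpha> \<longrightarrow> (\<exists>n. n \<notin> set (ctrl B) \<and> C = insert n T))"
    using succ_stk_moves[OF \<open>\<alpha> \<noteq> bot\<close> Tsig, of \<iota>] unfolding B' next_activation_def
    by (cases "sup a w = \<alpha>") auto
  show "\<exists>Lo. ctrl B' = occ (ctrl B) (sigma_star \<tau> B) @ Lo" using B' by simp
  show "T \<subseteq> set (occ (ctrl B) (sigma_star \<tau> B))" using sigma_star_subset[OF B Tsig] .
qed

section \<open>Greedy transitions\<close>

locale greedy_transition =
  fixes \<alpha> :: "'a::bounded_semilattice_sup_bot" and \<tau> :: "('x,'a) mor"
    and B :: "('x,'a) board" and Bs :: "('x,'a) board list"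
  assumes alpha_ne_bot: "\<alpha> \<noteq> bot" and board: "is_board B" and bset_B: "bset B = mdom \<tau>"
    and morphism: "is_morphism \<tau>" and greedy: "greedy_trans \<alpha> \<tau> B Bs"
begin

definition "resets = rev (filter (\<lambda>\<gamma>. covered \<gamma> B) (ctrl B))"
definition "k = length resets"

abbreviation "L \<equiv> ctrl B"

lemma greedy_steps:
  "length Bs = k + 4" "Bs ! 0 = B" "\<And>j. j < k \<Longrightarrow> Bs ! Suc j = reset_fun (resets ! j) (Bs ! j)"
  "Bs ! (k + 1) = pop_fun (Bs ! k)" "succ_step \<alpha> \<tau> (Bs ! (k + 1)) (Bs ! (k + 2))"
  "Bs ! (k + 3) = thin_fun (Bs ! (k + 2))"
  using greedy unfolding greedy_trans_def resets_def[symmetric] k_def[symmetric] Let_def by auto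

lemma distinct_L: "distinct L" using board by (simp add: is_board_def)

lemma reset_phase_boards:
  "j \<le> k \<Longrightarrow> is_board (Bs ! j) \<and> (\<exists>P. ctrl (Bs ! j) = filter P L) \<and> bset (Bs ! j) = bset B"
proof (induction j)
  case 0
  have "ctrl (Bs ! 0) = filter (\<lambda>_. True) L" using greedy_steps(2) by simp
  then show ?case using greedy_steps(2) board by blast
next
  case (Suc j)
  then obtain P where P: "ctrl (Bs ! j) = filter P L" and IH: "is_board (Bs ! j)" "bset (Bs ! j) = bset B"
    by auto
  have step: "Bs ! Suc j = reset_fun (resets ! j) (Bs ! j)" using greedy_steps(3) Suc by simp
  obtain Q where "ctrl (Bs ! Suc j) = filter Q (ctrl (Bs ! j))"
    unfolding step reset_fun_simps(2) occ_def by blast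
  then have "ctrl (Bs ! Suc j) = filter (\<lambda>\<gamma>. P \<gamma> \<and> Q \<gamma>) L" using P by simp
  moreover have "is_board (Bs ! Suc j)" "bset (Bs ! Suc j) = bset B"
    using reset_fun_board[OF IH(1)] IH(2) by (simp_all add: step reset_fun_simps)
  ultimately show ?case by blast
qed

lemma resets_decreasing: "i < k \<Longrightarrow> j < i \<Longrightarrow> index L (resets ! i) < index L (resets ! j)"
proof -
  assume ik: "i < k" and ji: "j < i"
  let ?C = "filter (\<lambda>\<gamma>. covered \<gamma> B) L"
  have len: "length ?C = k" by (simp add: k_def resets_def)
  have nth: "resets ! i = ?C ! (k - 1 - i)" "resets ! j = ?C ! (k - 1 - j)"
    using ik ji len by (auto simp: resets_def rev_nth)
  have "distinct ?C" using distinct_L by simp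
  then have "index ?C (resets ! i) = k - 1 - i" "index ?C (resets ! j) = k - 1 - j"
    using nth index_nth[of ?C "k - 1 - i"] index_nth[of ?C "k - 1 - j"] ik ji len by simp_all
  then have "index ?C (resets ! i) < index ?C (resets ! j)" using ik ji by simp
  moreover have "resets ! i \<in> set ?C" "resets ! j \<in> set ?C"
    using ik ji nth_mem[of i resets] nth_mem[of j resets] unfolding k_def
    by (simp_all only: resets_def set_rev)
  ultimately show ?thesis using index_filter_le_iff[OF distinct_L] by (meson not_le)
qed

lemma resets_covered: "j \<le> i \<Longrightarrow> i < k \<Longrightarrow> covered (resets ! i) (Bs ! j)"
proof (induction j arbitrary: i)
  case 0
  then have "resets ! i \<in> set resets" by (simp add: k_def)
  then show ?case using greedy_steps(2) by (simp add: resets_def)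
next
  case (Suc j)
  have cov: "covered (resets ! i) (Bs ! j)" "covered (resets ! j) (Bs ! j)" using Suc by auto
  have "j \<le> k" using Suc.prems by simp
  then obtain P where P: "ctrl (Bs ! j) = filter P L" and Bj: "is_board (Bs ! j)"
    using reset_phase_boards by blast
  have "index L (resets ! i) < index L (resets ! j)" using resets_decreasing Suc.prems by simp
  moreover have "resets ! i \<in> set (ctrl (Bs ! j))" "resets ! j \<in> set (ctrl (Bs ! j))"
    using cov by (simp_all add: covered_def)
  ultimately have "index (ctrl (Bs ! j)) (resets ! i) < index (ctrl (Bs ! j)) (resets ! j)"
    using index_filter_le_iff[OF distinct_L] P by (metis not_le)
  then have "covered (resets ! i) (reset_fun (resets ! j) (Bs ! j))"
    using reset_keeps_lower_covered[OF Bj cov(1)] cov(2) by (simp add: covered_def)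
  then show ?case using greedy_steps(3) Suc by simp
qed

lemma reset_phase_steps: "j < k \<Longrightarrow> reset_step (resets ! j) (Bs ! j) (Bs ! Suc j)"
  using resets_covered[of j j] greedy_steps(3) by (simp add: reset_step_def)

lemma covered_gets_reset: "covered g B \<Longrightarrow> \<exists>j<k. reset_step g (Bs ! j) (Bs ! Suc j)"
proof -
  assume "covered g B"
  then have "g \<in> set resets" by (simp add: resets_def covered_def)
  then obtain j where "j < k" "resets ! j = g" by (auto simp: k_def in_set_conv_nth)
  then show ?thesis using reset_phase_steps by blast
qed

lemma pop_board: "is_board (Bs ! (k+1))" "pop_step (Bs ! k) (Bs ! (k+1))"
  using pop_fun_board reset_phase_boards[of k] greedy_steps(4) by auto

lemma succ_board: "is_board (Bs ! (k+2))"
proof -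
  have "bset (Bs ! (k+1)) = mdom \<tau>"
    using greedy_steps(4) reset_phase_boards[of k] bset_B by (simp add: pop_fun_simps)
  then show ?thesis
    using succ_step_board[OF pop_board(1) morphism alpha_ne_bot greedy_steps(5)] by simp
qed

lemma thin_board: "is_board (Bs ! (k+3))" "weak_step (Bs ! (k+2)) (Bs ! (k+3))"
  using thin_fun_board[OF succ_board] greedy_steps(6) by auto

lemma bset_last: "bset (Bs ! (k+3)) = mcod \<tau>"
proof -
  have "bset (Bs ! (k+2)) = mcod \<tau>" using greedy_steps(5) unfolding succ_step_iff by auto
  then show ?thesis using greedy_steps(6) by (simp add: thin_fun_simps)
qed

lemma boards: "j < length Bs \<Longrightarrow> is_board (Bs ! j)"
proof -
  assume "j < length Bs"
  then have "j \<le> k \<or> j = k+1 \<or> j = k+2 \<or> j = k+3" using greedy_steps(1) by auto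
  then show ?thesis using reset_phase_boards pop_board succ_board thin_board by auto
qed

end

lemma thin_fun_cell_least:
  assumes B: "is_board B" and C: "C \<in> stk B x a" and S': "S' \<in> stk (thin_fun B) x a"
  shows "S' \<in> stk B x a" "S' = C \<or> stack_less (ctrl B) S' C"
proof -
  have ne: "stk B x a \<noteq> {}" using C by blast
  then have "S' = stack_min (ctrl B) (stk B x a)" using S' thin_fun_least(1)[OF B] by simp
  then show "S' \<in> stk B x a" "S' = C \<or> stack_less (ctrl B) S' C"
    using thin_fun_least(2,3)[OF B ne] C by auto
qed

lemma stack_less_first_le:
  assumes L: "distinct L" "S' \<subseteq> set L" "C \<subseteq> set L"
    and less: "S' = C \<or> stack_less L S' C" and "G \<subseteq> C" and d: "d \<in> C - G"
  shows "\<exists>e\<in>S' - G. index L e \<le> index L d"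
proof (cases "d \<in> S'")
  case True then show ?thesis using d by blast
next
  case False
  then have "stack_less L S' C" using less d by blast
  then obtain g where g: "g \<in> S' - C" "\<forall>z\<in>set L. index L z < index L g \<longrightarrow> (z \<in> S' \<longleftrightarrow> z \<in> C)"
    using stack_less_iff_agree_below[OF L] by blast
  have "d \<in> set L" using d L(3) by blast
  then have "index L g \<le> index L d" using g(2) d False by (metis DiffD1 not_le)
  moreover have "g \<in> S' - G" using g(1) \<open>G \<subseteq> C\<close> by blast
  ultimately show ?thesis by blast
qed

context greedy_transition
begin

text \<open>
  Resets only cut stacks above covered chips. A bottom segment \<open>G\<close> of uncovered chips, and the
  first chip above it, therefore survive the whole reset phase.
\<close>

lemma reset_phase_keeps_stack:
  assumes S: "S \<in> stk B v a" and G: "G \<subseteq> S" and uncovered: "\<forall>g\<in>G. \<not> covered g B"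
    and below: "\<forall>g\<in>G. \<forall>z\<in>S - G. index L g < index L z"
  shows "j \<le> k \<Longrightarrow> \<exists>T\<in>stk (Bs ! j) v a. T \<subseteq> S \<and> G \<subseteq> T \<and> (\<forall>d. first_in L (S - G) d \<longrightarrow> d \<in> T)"
proof (induction j)
  case 0 then show ?case using S G greedy_steps(2) by (intro bexI[of _ S]) (auto simp: first_in_def)
next
  case (Suc j)
  then obtain T where T: "T \<in> stk (Bs ! j) v a" "T \<subseteq> S" "G \<subseteq> T"
      "\<forall>d. first_in L (S - G) d \<longrightarrow> d \<in> T" by auto
  have j: "j < k" using Suc by simp
  then obtain P where P: "ctrl (Bs ! j) = filter P L" and Bj: "is_board (Bs ! j)"
    using reset_phase_boards by fastforce
  let ?c = "resets ! j"
  let ?T' = "restr (ctrl (Bs ! j)) ?c T"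
  have "covered ?c B" using resets_covered[of 0 j] j greedy_steps(2) by simp
  then have c_not_G: "?c \<notin> G" using uncovered by blast
  have keep: "z \<in> ?T'" if "z \<in> T" "?c \<in> T \<Longrightarrow> index L z \<le> index L ?c" for z
  proof -
    have "?c \<in> T \<Longrightarrow> chip_le (ctrl (Bs ! j)) z ?c"
      using that board_stack_subset[OF Bj T(1)] distinct_L unfolding P chip_le_filter[OF distinct_L]
      by (auto simp: chip_le_index)
    then show ?thesis using that(1) by (simp add: mem_restr)
  qed
  have "g \<in> ?T'" if "g \<in> G" for g
  proof (rule keep)
    show "g \<in> T" using that T(3) by blast
    show "index L g \<le> index L ?c" if "?c \<in> T" using below \<open>g \<in> G\<close> \<open>?c \<in> T\<close> T(2) c_not_G
      by (simp add: less_imp_le subset_iff)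
  qed
  moreover have "d \<in> ?T'" if d: "first_in L (S - G) d" for d
  proof (rule keep)
    show "d \<in> T" using d T(4) by blast
    show "index L d \<le> index L ?c" if "?c \<in> T" using d \<open>?c \<in> T\<close> T(2) c_not_G
      unfolding first_in_def by blast
  qed
  moreover have "?T' \<in> stk (Bs ! Suc j) v a" using greedy_steps(3)[OF j] T(1) by (simp add: reset_fun_simps)
  moreover have "?T' \<subseteq> S" using T(2) by (auto simp: mem_restr)
  ultimately show ?case by (intro bexI[of _ ?T']) auto
qed

lemma pop_keeps_stacks: "stk (Bs ! k) x a \<subseteq> stk (Bs ! (k+1)) x a"
  using greedy_steps(4) by (auto simp: pop_fun_simps)

lemma tracked_stack:
  assumes S: "S \<in> stk B v a" and e: "(v, w, v') \<in> mrel \<tau>" and G: "G \<subseteq> S"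
    and uncovered: "\<forall>g\<in>G. \<not> covered g B" and below: "\<forall>g\<in>G. \<forall>z\<in>S - G. index L g < index L z"
  obtains T C where "T \<in> stk (Bs ! (k+1)) v a" "G \<subseteq> T" "\<forall>d. first_in L (S - G) d \<longrightarrow> d \<in> T"
    "C \<in> stk (Bs ! (k+2)) v' (next_activation \<alpha> a w)" "T \<subseteq> C"
    "sup a w = \<alpha> \<Longrightarrow> \<exists>n. n \<notin> set (ctrl (Bs ! (k+1))) \<and> C = insert n T"
    "T \<subseteq> set (occ (ctrl (Bs ! (k+1))) (sigma_star \<tau> (Bs ! (k+1))))"
    "\<exists>Lo. ctrl (Bs ! (k+2)) = occ (ctrl (Bs ! (k+1))) (sigma_star \<tau> (Bs ! (k+1))) @ Lo"
proof -
  obtain T where T: "T \<in> stk (Bs ! k) v a" "G \<subseteq> T" "\<forall>d. first_in L (S - G) d \<longrightarrow> d \<in> T"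
    using reset_phase_keeps_stack[OF S G uncovered below, of k] by blast
  then have T1: "T \<in> stk (Bs ! (k+1)) v a" using pop_keeps_stacks by blast
  note succ = succ_step_follows_edge[OF pop_board(1) morphism alpha_ne_bot greedy_steps(5) T1 e]
  from succ(1) obtain C where "C \<in> stk (Bs ! (k+2)) v' (next_activation \<alpha> a w)" "T \<subseteq> C"
    "sup a w = \<alpha> \<Longrightarrow> \<exists>n. n \<notin> set (ctrl (Bs ! (k+1))) \<and> C = insert n T" by blast
  with that T1 T(2,3) succ(2,3) show ?thesis by blast
qed

lemma tracked_chips_present:
  assumes S: "S \<in> stk B v a" and e: "(v, w, v') \<in> mrel \<tau>" and G: "G \<subseteq> S"
    and uncovered: "\<forall>g\<in>G. \<not> covered g B" and below: "\<forall>g\<in>G. \<forall>z\<in>S - G. index L g < index L z"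
    and j: "j \<le> k + 2"
  shows "G \<subseteq> set (ctrl (Bs ! j)) \<and> (\<forall>d. first_in L (S - G) d \<longrightarrow> d \<in> set (ctrl (Bs ! j)))"
proof -
  obtain T C where T: "T \<in> stk (Bs ! (k+1)) v a" "G \<subseteq> T" "\<forall>d. first_in L (S - G) d \<longrightarrow> d \<in> T"
    and C: "C \<in> stk (Bs ! (k+2)) v' (next_activation \<alpha> a w)" "T \<subseteq> C"
    using tracked_stack[OF S e G uncovered below] by metis
  have "\<exists>x a' U. U \<in> stk (Bs ! j) x a' \<and> G \<subseteq> U \<and> (\<forall>d. first_in L (S - G) d \<longrightarrow> d \<in> U)"
  proof -
    consider "j \<le> k" | "j = k+1" | "j = k+2" using j by linarith
    then show ?thesis
    proof cases
      case 1 then show ?thesis using reset_phase_keeps_stack[OF S G uncovered below] by blast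
    next
      case 2 then show ?thesis using T by blast
    next
      case 3 then show ?thesis using T C by blast
    qed
  qed
  moreover have "is_board (Bs ! j)" using boards j greedy_steps(1) by simp
  ultimately show ?thesis using board_stack_subset by (metis subset_iff)
qed

lemma tracked_stack_nonempty:
  assumes S: "S \<in> stk B v a" and e: "(v, w, v') \<in> mrel \<tau>" and G: "G \<subseteq> S"
    and uncovered: "\<forall>g\<in>G. \<not> covered g B" and below: "\<forall>g\<in>G. \<forall>z\<in>S - G. index L g < index L z"
    and S': "S' \<in> stk (Bs ! (k+3)) v' (next_activation \<alpha> a w)"
    and grows: "S - G \<noteq> {} \<or> sup a w = \<alpha>"
  shows "S' - G \<noteq> {}"
proof -
  obtain T C where T: "T \<in> stk (Bs ! (k+1)) v a" "G \<subseteq> T" "\<forall>d. first_in L (S - G) d \<longrightarrow> d \<in> T"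
    and C: "C \<in> stk (Bs ! (k+2)) v' (next_activation \<alpha> a w)" "T \<subseteq> C"
      "sup a w = \<alpha> \<Longrightarrow> \<exists>n. n \<notin> set (ctrl (Bs ! (k+1))) \<and> C = insert n T"
    using tracked_stack[OF S e G uncovered below] by metis
  have "C - G \<noteq> {}"
  proof (cases "sup a w = \<alpha>")
    case True
    then obtain n where "n \<notin> set (ctrl (Bs ! (k+1)))" "C = insert n T" using C(3) by blast
    moreover have "G \<subseteq> set (ctrl (Bs ! (k+1)))" using T(1,2) board_stack_subset[OF pop_board(1)] by blast
    ultimately show ?thesis by blast
  next
    case False
    then have "S - G \<noteq> {}" using grows by simp
    moreover have "finite (S - G)" using board_stack_subset[OF board S] finite_subset by blast
    ultimately obtain d where "first_in L (S - G) d" using first_in_exists by blast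
    then show ?thesis using T(3) C(2) unfolding first_in_def by blast
  qed
  then obtain d where d: "d \<in> C - G" by blast
  have L2: "distinct (ctrl (Bs ! (k+2)))" using succ_board by (simp add: is_board_def)
  note S'2 = thin_fun_cell_least[OF succ_board C(1), folded greedy_steps(6), OF S']
  show ?thesis
    using stack_less_first_le[OF L2 board_stack_subset[OF succ_board S'2(1)]
        board_stack_subset[OF succ_board C(1)] S'2(2) _ d] T(2) C(2) by blast
qed

lemma succ_index_le:
  assumes "d \<in> set (occ (ctrl (Bs ! (k+1))) (sigma_star \<tau> (Bs ! (k+1))))"
    and "ctrl (Bs ! (k+2)) = occ (ctrl (Bs ! (k+1))) (sigma_star \<tau> (Bs ! (k+1))) @ Lo"
  shows "d \<in> set (ctrl (Bs ! (k+2)))" "index (ctrl (Bs ! (k+2))) d \<le> index L d"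
proof -
  let ?O = "occ (ctrl (Bs ! (k+1))) (sigma_star \<tau> (Bs ! (k+1)))"
  obtain P where P: "ctrl (Bs ! k) = filter P L" using reset_phase_boards by blast
  have "ctrl (Bs ! (k+1)) = filter P L" using P greedy_steps(4) by (simp add: pop_fun_simps)
  then have "index ?O d \<le> index L d"
    using assms(1) index_filter_le[of d] filter_filter[of _ P L] unfolding occ_def
    by (metis (no_types, lifting) index_filter_le le_trans set_filter)
  then show "index (ctrl (Bs ! (k+2))) d \<le> index L d" using assms by (simp add: index_append)
  show "d \<in> set (ctrl (Bs ! (k+2)))" using assms by simp
qed

text \<open>
  The measure of the acceptance proof: the first chip above \<open>G\<close> can only move down in the
  control, and if its position is unchanged it is the same chip.
\<close>

lemma tracked_first_index_le:
  assumes S: "S \<in> stk B v a" and e: "(v, w, v') \<in> mrel \<tau>" and G: "G \<subseteq> S"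
    and uncovered: "\<forall>g\<in>G. \<not> covered g B" and below: "\<forall>g\<in>G. \<forall>z\<in>S - G. index L g < index L z"
    and S': "S' \<in> stk (Bs ! (k+3)) v' (next_activation \<alpha> a w)" and d: "first_in L (S - G) d"
  shows "\<exists>d'. first_in (ctrl (Bs ! (k+3))) (S' - G) d' \<and> index (ctrl (Bs ! (k+3))) d' \<le> index L d \<and>
           (index (ctrl (Bs ! (k+3))) d' = index L d \<longrightarrow> d' = d)"
proof -
  let ?L2 = "ctrl (Bs ! (k+2))" and ?L3 = "ctrl (Bs ! (k+3))"
  obtain T C Lo where T: "G \<subseteq> T" "\<forall>d. first_in L (S - G) d \<longrightarrow> d \<in> T"
    and C: "C \<in> stk (Bs ! (k+2)) v' (next_activation \<alpha> a w)" "T \<subseteq> C"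
    and O: "T \<subseteq> set (occ (ctrl (Bs ! (k+1))) (sigma_star \<tau> (Bs ! (k+1))))"
      "?L2 = occ (ctrl (Bs ! (k+1))) (sigma_star \<tau> (Bs ! (k+1))) @ Lo"
    using tracked_stack[OF S e G uncovered below] by metis
  have dC: "d \<in> C - G" using d T C(2) unfolding first_in_def by blast
  have dT: "d \<in> T" using d T(2) by blast
  note d_L2 = succ_index_le[of d, OF _ O(2)]
  have L2: "distinct ?L2" using succ_board by (simp add: is_board_def)
  note S'2 = thin_fun_cell_least[OF succ_board C(1), folded greedy_steps(6), OF S']
  obtain e where e: "e \<in> S' - G" "index ?L2 e \<le> index ?L2 d"
    using stack_less_first_le[OF L2 board_stack_subset[OF succ_board S'2(1)]
        board_stack_subset[OF succ_board C(1)] S'2(2) _ dC] C(2) T(1) by blast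
  have S'3: "S' \<subseteq> set ?L3" using board_stack_subset[OF thin_board(1) S'] .
  then have "finite (S' - G)" using finite_subset by blast
  then obtain d' where d': "first_in ?L3 (S' - G) d'" using first_in_exists e(1) by blast
  have "?L3 = occ ?L2 (stk (Bs ! (k+3)))" using greedy_steps(6) thin_fun_simps(2) by metis
  then obtain Q where Q: "?L3 = filter Q ?L2" unfolding occ_def by blast
  have d'_L3: "d' \<in> set ?L3" "e \<in> set ?L3" using d' e(1) S'3 unfolding first_in_def by auto
  have "index ?L3 d' \<le> index ?L3 e" using d' e(1) unfolding first_in_def by blast
  then have "index ?L2 d' \<le> index ?L2 e" using index_filter_le_iff[OF L2] d'_L3 Q by metis
  moreover have "index ?L3 d' \<le> index ?L2 d'" using index_filter_le d'_L3(1) Q by metis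
  moreover have "index ?L2 d \<le> index L d" using d_L2 dT O(1) by blast
  ultimately have le: "index ?L3 d' \<le> index L d" "index ?L3 d' = index L d \<Longrightarrow> index ?L2 d' = index ?L2 d"
    using e(2) by linarith+
  have "d' = d" if "index ?L3 d' = index L d"
    using index_inj[of d' ?L2 d] le(2)[OF that] d'_L3(1) d_L2(1) dT O(1) Q by auto
  then show ?thesis using d' le(1) by blast
qed

lemma cell_nonempty:
  assumes e: "(v, w, v') \<in> mrel \<tau>" and occupied: "stk B v a \<noteq> {} \<or> (a = bot \<and> v \<in> bset B)"
  shows "stk (Bs ! (k+3)) v' (next_activation \<alpha> a w) \<noteq> {}"
proof -
  have "stk (Bs ! (k+1)) v a \<noteq> {}"
  proof (cases "stk B v a = {}")
    case False
    then obtain S where S: "S \<in> stk B v a" by blast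
    then obtain T where "T \<in> stk (Bs ! k) v a"
      using reset_phase_keeps_stack[OF S, of "{}" k] by auto
    then show ?thesis using pop_keeps_stacks by blast
  next
    case True
    then have "a = bot" "v \<in> bset (Bs ! k)" using occupied reset_phase_boards[of k] by auto
    then show ?thesis using greedy_steps(4) by (simp add: pop_fun_simps)
  qed
  then obtain T where T: "T \<in> stk (Bs ! (k+1)) v a" by blast
  obtain C where "C \<in> stk (Bs ! (k+2)) v' (next_activation \<alpha> a w)"
    using succ_step_follows_edge(1)[OF pop_board(1) morphism alpha_ne_bot greedy_steps(5) T e] by blast
  then show ?thesis using greedy_steps(6) thin_fun_least(1)[OF succ_board] by fastforce
qed

end

section \<open>Greedy runs as sequences of blocks\<close>

text \<open>\<open>p n\<close> is the position in the run at which the \<open>n\<close>-th greedy transition starts.\<close>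

locale greedy_blocks =
  fixes \<alpha> :: "'a::bounded_semilattice_sup_bot" and \<tau> :: "nat \<Rightarrow> ('x,'a) mor"
    and b :: "nat \<Rightarrow> ('x,'a) board" and p :: "nat \<Rightarrow> nat"
  assumes alpha_ne_bot: "\<alpha> \<noteq> bot" and morphism: "\<forall>n. is_morphism (\<tau> n)"
    and path: "describes_path \<tau>" and boards: "\<forall>i. is_board (b i)"
    and start: "b 0 = empty_board (mdom (\<tau> 0))" and p0: "p 0 = 0"
    and greedy: "\<forall>n. greedy_trans \<alpha> (\<tau> n) (b (p n)) (map b [p n..<Suc (p (Suc n))])"
begin

definition "block n = map b [p n..<Suc (p (Suc n))]"

lemma block_transition: "greedy_transition \<alpha> (\<tau> n) (b (p n)) (block n)"
proof (induction n)
  case 0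
  have "bset (b (p 0)) = mdom (\<tau> 0)" using start p0 by (simp add: empty_board_def)
  then show ?case
    unfolding greedy_transition_def block_def using alpha_ne_bot boards morphism greedy by blast
next
  case (Suc n)
  interpret g: greedy_transition \<alpha> "\<tau> n" "b (p n)" "block n" by (rule Suc)
  have "length (block n) = Suc (p (Suc n)) - p n" by (simp only: block_def length_map length_upt)
  then have "p (Suc n) = p n + g.k + 3" using g.greedy_steps(1) by arith
  then have "block n ! (g.k + 3) = b (p (Suc n))" by (simp add: block_def nth_map_upt add.assoc)
  then have "bset (b (p (Suc n))) = mdom (\<tau> (Suc n))"
    using g.bset_last path by (simp add: describes_path_def)
  then show ?case
    unfolding greedy_transition_def block_def using alpha_ne_bot boards morphism greedy by blast
qed

abbreviation "nres n \<equiv> greedy_transition.k (b (p n))"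

lemma p_Suc: "p (Suc n) = p n + nres n + 3"
proof -
  interpret g: greedy_transition \<alpha> "\<tau> n" "b (p n)" "block n" by (rule block_transition)
  have "length (block n) = Suc (p (Suc n)) - p n" by (simp only: block_def length_map length_upt)
  then show ?thesis using g.greedy_steps(1) by arith
qed

lemma strict_mono_p: "strict_mono p" unfolding strict_mono_Suc_iff using p_Suc by simp

lemma block_nth: "j \<le> nres n + 3 \<Longrightarrow> block n ! j = b (p n + j)"
  unfolding block_def using p_Suc[of n] by (simp add: nth_map_upt)

lemma block_last: "block n ! (nres n + 3) = b (p (Suc n))"
  using block_nth[of "nres n + 3" n] p_Suc[of n] by (simp add: add.assoc)

lemma bset_block: "bset (b (p n)) = mdom (\<tau> n)"
  using block_transition[of n] by (simp add: greedy_transition_def)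

lemma block_start_thin: "S \<in> stk (b (p (Suc n))) x a \<Longrightarrow> S' \<in> stk (b (p (Suc n))) x a \<Longrightarrow> S = S'"
proof -
  interpret g: greedy_transition \<alpha> "\<tau> n" "b (p n)" "block n" by (rule block_transition)
  show "S \<in> stk (b (p (Suc n))) x a \<Longrightarrow> S' \<in> stk (b (p (Suc n))) x a \<Longrightarrow> S = S'"
    using g.greedy_steps(6) block_last thin_fun_single by metis
qed

lemma covered_reset_in_block:
  "covered \<gamma> (b (p n)) \<Longrightarrow> \<exists>i. p n \<le> i \<and> i < p (Suc n) \<and> reset_step \<gamma> (b i) (b (Suc i))"
proof -
  interpret g: greedy_transition \<alpha> "\<tau> n" "b (p n)" "block n" by (rule block_transition)
  assume "covered \<gamma> (b (p n))"
  then obtain j where j: "j < nres n" "reset_step \<gamma> (block n ! j) (block n ! Suc j)"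
    using g.covered_gets_reset by blast
  then have "block n ! j = b (p n + j)" "block n ! Suc j = b (Suc (p n + j))" using block_nth by auto
  then show ?thesis using j p_Suc by (intro exI[of _ "p n + j"]) auto
qed

context
  fixes n S v a w v' G
  assumes S: "S \<in> stk (b (p n)) v a" and e: "(v, w, v') \<in> mrel (\<tau> n)" and G: "G \<subseteq> S"
    and uncovered: "\<forall>g\<in>G. \<not> covered g (b (p n))"
    and below: "\<forall>g\<in>G. \<forall>z\<in>S - G. index (ctrl (b (p n))) g < index (ctrl (b (p n))) z"
begin

interpretation g: greedy_transition \<alpha> "\<tau> n" "b (p n)" "block n" by (rule block_transition)

lemma block_chips_present:
  assumes "p n \<le> i" "i < p (Suc n)"
  shows "G \<subseteq> set (ctrl (b i)) \<and> (\<forall>d. first_in (ctrl (b (p n))) (S - G) d \<longrightarrow> d \<in> set (ctrl (b i)))"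
proof -
  have "i - p n \<le> nres n + 2" using assms p_Suc[of n] by arith
  moreover have "block n ! (i - p n) = b i" using block_nth[of "i - p n" n] assms calculation by simp
  ultimately show ?thesis using g.tracked_chips_present[OF S e G uncovered below] by metis
qed

lemma block_stack_nonempty:
  "S' \<in> stk (b (p (Suc n))) v' (next_activation \<alpha> a w) \<Longrightarrow> S - G \<noteq> {} \<or> sup a w = \<alpha> \<Longrightarrow> S' - G \<noteq> {}"
  using g.tracked_stack_nonempty[OF S e G uncovered below] block_last by metis

lemma block_first_index_le:
  "S' \<in> stk (b (p (Suc n))) v' (next_activation \<alpha> a w) \<Longrightarrow> first_in (ctrl (b (p n))) (S - G) d \<Longrightarrow>
   \<exists>d'. first_in (ctrl (b (p (Suc n)))) (S' - G) d' \<and>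
     index (ctrl (b (p (Suc n)))) d' \<le> index (ctrl (b (p n))) d \<and>
     (index (ctrl (b (p (Suc n)))) d' = index (ctrl (b (p n))) d \<longrightarrow> d' = d)"
  using g.tracked_first_index_le[OF S e G uncovered below] block_last by metis

end

lemma block_cell_nonempty:
  assumes "(v, w, v') \<in> mrel (\<tau> n)" "stk (b (p n)) v a \<noteq> {} \<or> (a = bot \<and> v \<in> bset (b (p n)))"
  shows "stk (b (p (Suc n))) v' (next_activation \<alpha> a w) \<noteq> {}"
proof -
  interpret g: greedy_transition \<alpha> "\<tau> n" "b (p n)" "block n" by (rule block_transition)
  show ?thesis using g.cell_nonempty[OF assms] block_last by simp
qed

end

section \<open>The trace of a path\<close>

fun join_upto :: "(nat \<Rightarrow> 'a::semilattice_sup) \<Rightarrow> nat \<Rightarrow> 'a" where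
  "join_upto g 0 = g 0"
| "join_upto g (Suc j) = sup (join_upto g j) (g (Suc j))"

lemma join_upto_cong: "(\<And>j. j \<le> m \<Longrightarrow> g j = g' j) \<Longrightarrow> join_upto g m = join_upto g' m"
  by (induction m) auto

lemma join_upto_upper: "j \<le> m \<Longrightarrow> g j \<le> join_upto g m"
  by (induction m) (auto simp: le_Suc_eq intro: le_supI1)

lemma seg_path:
  "(x, c, z) \<in> seg \<tau> n m \<Longrightarrow> \<exists>f g. f 0 = x \<and> f (Suc m) = z \<and>
     (\<forall>j\<le>m. (f j, g j, f (Suc j)) \<in> mrel (\<tau> (n + j))) \<and> join_upto g m = c"
proof (induction m arbitrary: z c)
  case 0
  then show ?case by (intro exI[of _ "\<lambda>j. if j = 0 then x else z"] exI[of _ "\<lambda>_. c"]) auto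
next
  case (Suc m)
  then obtain y a b' where y: "(x, a, y) \<in> seg \<tau> n m" "(y, b', z) \<in> mrel (\<tau> (n + Suc m))" "sup a b' = c"
    by (auto simp: rcomp_def)
  then obtain f g where fg: "f 0 = x" "f (Suc m) = y" "\<forall>j\<le>m. (f j, g j, f (Suc j)) \<in> mrel (\<tau> (n + j))"
    "join_upto g m = a" using Suc.IH by blast
  let ?f = "f(Suc (Suc m) := z)" and ?g = "g(Suc m := b')"
  have "join_upto ?g m = a" using fg(4) join_upto_cong[of m ?g g] by simp
  then have "join_upto ?g (Suc m) = c" using y(3) by simp
  moreover have "\<forall>j\<le>Suc m. (?f j, ?g j, ?f (Suc j)) \<in> mrel (\<tau> (n + j))"
    using fg(2,3) y(2) by (auto simp: le_Suc_eq)
  moreover have "?f 0 = x" "?f (Suc (Suc m)) = z" using fg(1) by simp_all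
  ultimately show ?case by blast
qed

fun activation :: "'a::bounded_semilattice_sup_bot \<Rightarrow> (nat \<Rightarrow> 'a) \<Rightarrow> nat \<Rightarrow> 'a" where
  "activation \<alpha> W 0 = bot"
| "activation \<alpha> W (Suc n) = next_activation \<alpha> (activation \<alpha> W n) (W n)"

lemma activation_le: "(\<And>n. W n \<le> \<alpha>) \<Longrightarrow> activation \<alpha> W n \<le> \<alpha>"
  by (induction n) (auto simp: next_activation_def)

lemma activation_completes:
  assumes W: "\<And>n. W n \<le> \<alpha>" and full: "join_upto (\<lambda>j. W (n0 + j)) m = \<alpha>"
  shows "\<exists>n. n0 \<le> n \<and> sup (activation \<alpha> W n) (W n) = \<alpha>"
proof (rule ccontr)
  assume incomplete: "\<not> (\<exists>n. n0 \<le> n \<and> sup (activation \<alpha> W n) (W n) = \<alpha>)"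
  have "sup (activation \<alpha> W (n0 + j)) (W (n0 + j)) = sup (activation \<alpha> W n0) (join_upto (\<lambda>j. W (n0 + j)) j)"
    for j
  proof (induction j)
    case (Suc j)
    have "sup (activation \<alpha> W (n0 + j)) (W (n0 + j)) \<noteq> \<alpha>" using incomplete by simp
    then show ?case using Suc by (simp add: next_activation_def sup_assoc)
  qed simp
  then have "sup (activation \<alpha> W (n0 + m)) (W (n0 + m)) = \<alpha>"
    using full activation_le[OF W] by (simp add: sup_absorb2)
  then show False using incomplete by auto
qed

lemma strict_mono_ge_offset: "strict_mono (k :: nat \<Rightarrow> nat) \<Longrightarrow> k 0 + i \<le> k i"
proof (induction i)
  case (Suc i)
  then have "k i < k (Suc i)" by (simp add: strict_mono_def)
  then show ?case using Suc by simp
qed simp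

definition block_of :: "(nat \<Rightarrow> nat) \<Rightarrow> nat \<Rightarrow> nat" where
  "block_of k u = (LEAST i. u < k (Suc i))"

lemma block_of_bounds:
  assumes k: "strict_mono k" and u: "k 0 \<le> u"
  shows "k (block_of k u) \<le> u \<and> u < k (Suc (block_of k u))"
proof -
  have "u < k (Suc u)" using strict_mono_ge_offset[OF k, of "Suc u"] by simp
  then have upper: "u < k (Suc (block_of k u))" unfolding block_of_def by (rule LeastI)
  have "k (block_of k u) \<le> u"
  proof (cases "block_of k u")
    case (Suc i)
    then have "\<not> u < k (Suc i)" unfolding block_of_def by (metis lessI not_less_Least)
    then show ?thesis using Suc by simp
  qed (use u in simp)
  then show ?thesis using upper by simp
qed

lemma block_of_eq:
  assumes k: "strict_mono k" and u: "k i \<le> u" "u < k (Suc i)"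
  shows "block_of k u = i"
  unfolding block_of_def
proof (rule Least_equality)
  show "u < k (Suc i)" using u by simp
  fix i' assume "u < k (Suc i')"
  show "i \<le> i'"
  proof (rule ccontr)
    assume "\<not> i \<le> i'"
    then have "k (Suc i') \<le> k i" using k by (simp add: strict_mono_less_eq)
    then show False using u \<open>u < k (Suc i')\<close> by simp
  qed
qed

lemma concat_segments:
  assumes k: "strict_mono k"
    and start: "\<And>i. F i 0 = s i" and stop: "\<And>i. F i (k (Suc i) - k i) = s (Suc i)"
    and edges: "\<And>i j. j < k (Suc i) - k i \<Longrightarrow> (F i j, Gw i j, F i (Suc j)) \<in> mrel (\<tau> (k i + j))"
  obtains V W where "V 0 = s 0" "\<And>n. (V n, W n, V (Suc n)) \<in> mrel (\<tau> (k 0 + n))"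
    "\<And>i j. j < k (Suc i) - k i \<Longrightarrow> W (k i - k 0 + j) = Gw i j"
    "\<And>n. \<exists>i j. j < k (Suc i) - k i \<and> W n = Gw i j"
proof -
  define V where "V n = F (block_of k (k 0 + n)) (k 0 + n - k (block_of k (k 0 + n)))" for n
  define W where "W n = Gw (block_of k (k 0 + n)) (k 0 + n - k (block_of k (k 0 + n)))" for n
  have at: "V n = F i j \<and> W n = Gw i j" if "k 0 + n = k i + j" "j < k (Suc i) - k i" for n i j
  proof -
    have "block_of k (k 0 + n) = i" using block_of_eq[OF k, of i "k 0 + n"] that by simp
    then show ?thesis unfolding V_def W_def using that by simp
  qed
  have locate: "\<exists>i j. k 0 + n = k i + j \<and> j < k (Suc i) - k i" for n
    using block_of_bounds[OF k, of "k 0 + n"]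
    by (intro exI[of _ "block_of k (k 0 + n)"] exI[of _ "k 0 + n - k (block_of k (k 0 + n))"]) auto
  have "(V n, W n, V (Suc n)) \<in> mrel (\<tau> (k 0 + n))" for n
  proof -
    obtain i j where ij: "k 0 + n = k i + j" "j < k (Suc i) - k i" using locate by blast
    have "V (Suc n) = F i (Suc j)"
    proof (cases "Suc j < k (Suc i) - k i")
      case True then show ?thesis using at[of "Suc n" i "Suc j"] ij(1) by simp
    next
      case False
      then have "Suc j = k (Suc i) - k i" using ij(2) by simp
      moreover have "k i < k (Suc i)" "k (Suc i) < k (Suc (Suc i))" using k by (simp_all add: strict_mono_def)
      ultimately have "k 0 + Suc n = k (Suc i) + 0" "0 < k (Suc (Suc i)) - k (Suc i)" using ij(1) by simp_all
      then have "V (Suc n) = F (Suc i) 0" using at by blast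
      then show ?thesis using start stop \<open>Suc j = k (Suc i) - k i\<close> by simp
    qed
    then show ?thesis using edges[OF ij(2)] at[OF ij] ij(1) by simp
  qed
  moreover have "V 0 = s 0" using at[of 0 0 0] start k by (simp add: strict_mono_def)
  moreover have "W (k i - k 0 + j) = Gw i j" if "j < k (Suc i) - k i" for i j
    using at[OF _ that] strict_mono_ge_offset[OF k, of i] by simp
  moreover have "\<exists>i j. j < k (Suc i) - k i \<and> W n = Gw i j" for n
    using locate at by blast
  ultimately show ?thesis using that by blast
qed

lemma trace_condition_path:
  assumes "trace_condition \<alpha> \<tau>"
  shows "\<exists>T0 V W. V 0 \<in> mdom (\<tau> T0) \<and> (\<forall>n. (V n, W n, V (Suc n)) \<in> mrel (\<tau> (T0 + n))) \<and>
    (\<forall>N. \<exists>n\<ge>N. sup (activation \<alpha> W n) (W n) = \<alpha>)"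
proof -
  obtain k s where k: "strict_mono k" and s: "\<forall>i. s i \<in> mdom (\<tau> (k i))"
    and trace: "\<forall>i. (s i, \<alpha>, s (Suc i)) \<in> Ppath \<tau> (k i) (k (Suc i))"
    using assms unfolding trace_condition_def by blast
  have len: "Suc (k (Suc i) - k i - 1) = k (Suc i) - k i" for i
    using k by (simp add: strict_mono_def Suc_diff_Suc)
  have "\<forall>i. \<exists>f g. f 0 = s i \<and> f (k (Suc i) - k i) = s (Suc i) \<and>
      (\<forall>j < k (Suc i) - k i. (f j, g j, f (Suc j)) \<in> mrel (\<tau> (k i + j))) \<and>
      join_upto g (k (Suc i) - k i - 1) = \<alpha>"
  proof
    fix i
    have "(s i, \<alpha>, s (Suc i)) \<in> seg \<tau> (k i) (k (Suc i) - k i - 1)"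
      using trace unfolding Ppath_def by simp
    from seg_path[OF this] show "\<exists>f g. f 0 = s i \<and> f (k (Suc i) - k i) = s (Suc i) \<and>
      (\<forall>j < k (Suc i) - k i. (f j, g j, f (Suc j)) \<in> mrel (\<tau> (k i + j))) \<and>
      join_upto g (k (Suc i) - k i - 1) = \<alpha>"
      unfolding len by (metis len less_Suc_eq_le)
  qed
  then obtain F Gw where F: "\<And>i. F i 0 = s i" "\<And>i. F i (k (Suc i) - k i) = s (Suc i)"
    "\<And>i j. j < k (Suc i) - k i \<Longrightarrow> (F i j, Gw i j, F i (Suc j)) \<in> mrel (\<tau> (k i + j))"
    and full: "\<And>i. join_upto (Gw i) (k (Suc i) - k i - 1) = \<alpha>"
    by metis
  obtain V W where V: "V 0 = s 0" "\<And>n. (V n, W n, V (Suc n)) \<in> mrel (\<tau> (k 0 + n))"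
    and W: "\<And>i j. j < k (Suc i) - k i \<Longrightarrow> W (k i - k 0 + j) = Gw i j"
      "\<And>n. \<exists>i j. j < k (Suc i) - k i \<and> W n = Gw i j"
    using concat_segments[OF k F] by blast
  have W_le: "W n \<le> \<alpha>" for n
    using W(2)[of n] full join_upto_upper len by (metis less_Suc_eq_le)
  have "\<exists>n\<ge>N. sup (activation \<alpha> W n) (W n) = \<alpha>" for N
  proof -
    have "join_upto (\<lambda>j. W (k N - k 0 + j)) (k (Suc N) - k N - 1) = \<alpha>"
      using full[of N] join_upto_cong W(1) len by (metis less_Suc_eq_le)
    then obtain n where "k N - k 0 \<le> n" "sup (activation \<alpha> W n) (W n) = \<alpha>"
      using activation_completes[of W \<alpha>, OF W_le] by blast
    moreover have "N \<le> k N - k 0" using strict_mono_ge_offset[OF k, of N] by simp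
    ultimately show ?thesis by (meson le_trans)
  qed
  then show ?thesis using V s by (intro exI[of _ "k 0"] exI[of _ V] exI[of _ W]) auto
qed

section \<open>Acceptance of greedy runs\<close>

lemma single_stack_cells_uncovered_card:
  fixes B :: "('x, 'a::finite) board"
  assumes B: "is_board B" and single: "\<And>x a S S'. S \<in> stk B x a \<Longrightarrow> S' \<in> stk B x a \<Longrightarrow> S = S'"
    and G: "G \<subseteq> set (ctrl B)" "\<forall>g\<in>G. \<not> covered g B"
  shows "card G \<le> card (bset B) * card (UNIV :: 'a set)"
proof -
  have top: "\<exists>c. \<exists>S. S \<in> stk B (fst c) (snd c) \<and> is_top (ctrl B) S g" if "g \<in> G" for g
    using that G unfolding covered_def by fastforce
  define cell :: "nat \<Rightarrow> _ \<times> 'a" where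
    "cell g = (SOME c. \<exists>S. S \<in> stk B (fst c) (snd c) \<and> is_top (ctrl B) S g)" for g
  have cell: "\<exists>S. S \<in> stk B (fst (cell g)) (snd (cell g)) \<and> is_top (ctrl B) S g" if "g \<in> G" for g
    unfolding cell_def using someI_ex[OF top[OF that]] .
  have "cell ` G \<subseteq> bset B \<times> UNIV"
  proof (rule image_subsetI)
    fix g assume "g \<in> G"
    then have "fst (cell g) \<in> bset B" using cell board_cell_outside[OF B] by blast
    then show "cell g \<in> bset B \<times> UNIV" by (cases "cell g") simp
  qed
  moreover have "inj_on cell G"
  proof
    fix g g' assume g: "g \<in> G" "g' \<in> G" "cell g = cell g'"
    obtain S where S: "S \<in> stk B (fst (cell g)) (snd (cell g))" "is_top (ctrl B) S g"
      using cell[OF g(1)] by blast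
    obtain S' where S': "S' \<in> stk B (fst (cell g)) (snd (cell g))" "is_top (ctrl B) S' g'"
      using cell[OF g(2)] g(3) by auto
    have "S = S'" using single S(1) S'(1) .
    then have "chip_le (ctrl B) g g'" "chip_le (ctrl B) g' g"
      using S(2) S'(2) unfolding is_top_def by auto
    moreover have "distinct (ctrl B)" using B by (simp add: is_board_def)
    ultimately have "index (ctrl B) g = index (ctrl B) g'" "g \<in> set (ctrl B)" "g' \<in> set (ctrl B)"
      by (auto simp: chip_le_index)
    then show "g = g'" by (rule index_inj[rotated 2])
  qed
  moreover have "finite (bset B \<times> (UNIV :: 'a set))" using B by (simp add: is_board_def)
  ultimately have "card G \<le> card (bset B \<times> (UNIV :: 'a set))"
    by (intro card_inj_on_le)
  then show ?thesis by (simp add: card_cartesian_product)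
qed

lemma nonincreasing_eventually_constant:
  assumes "\<And>n. n \<ge> n1 \<Longrightarrow> f (Suc n) \<le> (f n :: nat)"
  shows "\<exists>N\<ge>n1. \<forall>n\<ge>N. f n = f N"
proof -
  obtain N where N: "N \<ge> n1" "\<And>n. n \<ge> n1 \<Longrightarrow> f N \<le> f n"
    using ex_has_least_nat[of "\<lambda>n. n \<ge> n1" n1 f] by auto
  have "f n \<le> f N" if "n \<ge> N" for n
    using that
  proof (induction n rule: dec_induct)
    case (step n) then show ?case using assms[of n] N(1) by simp
  qed simp
  then show ?thesis using N by (meson order.trans le_antisym)
qed

locale rejecting_greedy_run = greedy_blocks \<alpha> \<tau> b p
  for \<alpha> :: "'a::{finite,bounded_semilattice_sup_bot}" and \<tau> :: "nat \<Rightarrow> ('x,'a) mor" and b p +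
  fixes M :: "('x,'a) mor set" and T0 :: nat and V :: "nat \<Rightarrow> 'x" and W :: "nat \<Rightarrow> 'a"
  assumes finite_M: "finite M" and in_M: "\<forall>i. \<tau> i \<in> M"
    and V0: "V 0 \<in> mdom (\<tau> T0)" and edge: "\<forall>n. (V n, W n, V (Suc n)) \<in> mrel (\<tau> (T0 + n))"
    and completes: "\<forall>N. \<exists>n\<ge>N. sup (activation \<alpha> W n) (W n) = \<alpha>"
    and not_accepting: "\<not> accepting b"
begin

abbreviation "Bt n \<equiv> b (p (T0 + n))"
abbreviation "Lt n \<equiv> ctrl (Bt n)"
abbreviation "act n \<equiv> activation \<alpha> W n"

lemma trace_cell_nonempty: "stk (Bt (Suc n)) (V (Suc n)) (act (Suc n)) \<noteq> {}"
proof (induction n)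
  case 0
  have "V 0 \<in> bset (Bt 0)" using V0 bset_block by simp
  moreover have "(V 0, W 0, V 1) \<in> mrel (\<tau> T0)" using edge[rule_format, of 0] by simp
  ultimately show ?case using block_cell_nonempty[of "V 0" "W 0" "V 1" "T0" bot] by simp
next
  case (Suc n)
  have "(V (Suc n), W (Suc n), V (Suc (Suc n))) \<in> mrel (\<tau> (T0 + Suc n))" using edge by blast
  from block_cell_nonempty[OF this, of "act (Suc n)"] show ?case using Suc by simp
qed

text \<open>
  Well defined for \<open>n \<ge> 1\<close>: block-start boards are thinned, so the cell holds exactly one stack.
\<close>

definition "trace_stack n = (THE S. S \<in> stk (Bt n) (V n) (act n))"

lemma trace_stack_in: "n \<ge> 1 \<Longrightarrow> trace_stack n \<in> stk (Bt n) (V n) (act n)"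
proof -
  assume "n \<ge> 1"
  then obtain n' where n': "n = Suc n'" by (cases n) auto
  then have "stk (Bt n) (V n) (act n) \<noteq> {}" using trace_cell_nonempty[of n'] by simp
  then obtain S where S: "S \<in> stk (Bt n) (V n) (act n)" by blast
  have unique: "S' = S" if "S' \<in> stk (Bt n) (V n) (act n)" for S'
    using block_start_thin[of S' "T0 + n'"] that S n' by simp
  have "trace_stack n = S" unfolding trace_stack_def by (rule the_equality) (use S unique in blast)+
  then show ?thesis using S by simp
qed

lemma trace_stack_subset: "n \<ge> 1 \<Longrightarrow> trace_stack n \<subseteq> set (Lt n)"
  using board_stack_subset[OF boards[rule_format] trace_stack_in] by simp

definition stable_prefix :: "nat set \<Rightarrow> nat \<Rightarrow> bool" where
  "stable_prefix G N \<longleftrightarrow> N \<ge> 1 \<and> (\<forall>n\<ge>N. G \<subseteq> trace_stack n \<and>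
     (\<forall>g\<in>G. \<forall>z\<in>trace_stack n - G. index (Lt n) g < index (Lt n) z) \<and> (\<forall>g\<in>G. \<not> covered g (Bt n)))"

lemma stable_prefix_at:
  assumes "stable_prefix G N" "n \<ge> N"
  shows "trace_stack n \<in> stk (b (p (T0 + n))) (V n) (act n)"
    and "(V n, W n, V (Suc n)) \<in> mrel (\<tau> (T0 + n))" and "G \<subseteq> trace_stack n"
    and "\<forall>g\<in>G. \<not> covered g (b (p (T0 + n)))"
    and "\<forall>g\<in>G. \<forall>z\<in>trace_stack n - G. index (Lt n) g < index (Lt n) z"
    and "trace_stack (Suc n) \<in> stk (b (p (Suc (T0 + n)))) (V (Suc n)) (next_activation \<alpha> (act n) (W n))"
  using assms trace_stack_in[of n] trace_stack_in[of "Suc n"] edge unfolding stable_prefix_def by auto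

lemma stable_prefix_rest_nonempty:
  "stable_prefix G N \<Longrightarrow> n \<ge> N \<Longrightarrow> trace_stack n - G \<noteq> {} \<or> sup (act n) (W n) = \<alpha> \<Longrightarrow>
   trace_stack (Suc n) - G \<noteq> {}"
  using block_stack_nonempty[OF stable_prefix_at(1-5)] stable_prefix_at(6) by blast

lemma stable_prefix_first_index_le:
  "stable_prefix G N \<Longrightarrow> n \<ge> N \<Longrightarrow> first_in (Lt n) (trace_stack n - G) d \<Longrightarrow>
   \<exists>d'. first_in (Lt (Suc n)) (trace_stack (Suc n) - G) d' \<and> index (Lt (Suc n)) d' \<le> index (Lt n) d \<and>
     (index (Lt (Suc n)) d' = index (Lt n) d \<longrightarrow> d' = d)"
  using block_first_index_le[OF stable_prefix_at(1-5)] stable_prefix_at(6) by simp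

lemma stable_prefix_first_present:
  "stable_prefix G N \<Longrightarrow> n \<ge> N \<Longrightarrow> first_in (Lt n) (trace_stack n - G) d \<Longrightarrow>
   p (T0 + n) \<le> i \<Longrightarrow> i < p (Suc (T0 + n)) \<Longrightarrow> G \<subseteq> set (ctrl (b i)) \<and> d \<in> set (ctrl (b i))"
  using block_chips_present[OF stable_prefix_at(1-5)] by blast

lemma stable_prefix_rest_eventually_nonempty:
  assumes G: "stable_prefix G N"
  shows "\<exists>n1\<ge>N. \<forall>n\<ge>n1. trace_stack n - G \<noteq> {}"
proof -
  obtain n0 where n0: "n0 \<ge> N" "sup (act n0) (W n0) = \<alpha>" using completes by blast
  have "trace_stack n - G \<noteq> {}" if "n \<ge> Suc n0" for n
    using that
  proof (induction n rule: dec_induct)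
    case base then show ?case using stable_prefix_rest_nonempty[OF G n0(1)] n0(2) by blast
  next
    case (step n) then show ?case using stable_prefix_rest_nonempty[OF G, of n] n0(1) by simp
  qed
  then show ?thesis using n0(1) by (intro exI[of _ "Suc n0"]) auto
qed

lemma stable_prefix_first_eventually_constant:
  assumes G: "stable_prefix G N"
  shows "\<exists>d N1. N1 \<ge> N \<and> (\<forall>n\<ge>N1. first_in (Lt n) (trace_stack n - G) d)"
proof -
  obtain n1 where n1: "n1 \<ge> N" "\<And>n. n \<ge> n1 \<Longrightarrow> trace_stack n - G \<noteq> {}"
    using stable_prefix_rest_eventually_nonempty[OF G] by blast
  have N_pos: "N \<ge> 1" using G by (simp add: stable_prefix_def)
  define \<delta> where "\<delta> n = (SOME d. first_in (Lt n) (trace_stack n - G) d)" for n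
  have \<delta>: "first_in (Lt n) (trace_stack n - G) (\<delta> n)" if "n \<ge> n1" for n
  proof -
    have "n \<ge> 1" using that n1(1) N_pos by simp
    then have "finite (trace_stack n - G)" using trace_stack_subset finite_subset by blast
    then have "\<exists>d. first_in (Lt n) (trace_stack n - G) d" using first_in_exists n1(2)[OF that] by blast
    then show ?thesis unfolding \<delta>_def by (rule someI_ex)
  qed
  have decreasing: "index (Lt (Suc n)) (\<delta> (Suc n)) \<le> index (Lt n) (\<delta> n) \<and>
      (index (Lt (Suc n)) (\<delta> (Suc n)) = index (Lt n) (\<delta> n) \<longrightarrow> \<delta> (Suc n) = \<delta> n)" if n: "n \<ge> n1" for n
  proof -
    obtain d' where d': "first_in (Lt (Suc n)) (trace_stack (Suc n) - G) d'"
      "index (Lt (Suc n)) d' \<le> index (Lt n) (\<delta> n)" "index (Lt (Suc n)) d' = index (Lt n) (\<delta> n) \<longrightarrow> d' = \<delta> n"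
      using stable_prefix_first_index_le[OF G _ \<delta>[OF n]] n n1(1) by (meson order.trans)
    have "trace_stack (Suc n) - G \<subseteq> set (Lt (Suc n))" using trace_stack_subset[of "Suc n"] by auto
    moreover have "first_in (Lt (Suc n)) (trace_stack (Suc n) - G) (\<delta> (Suc n))" using \<delta>[of "Suc n"] n by simp
    ultimately have "d' = \<delta> (Suc n)" using first_in_unique d'(1) by metis
    then show ?thesis using d' by simp
  qed
  then obtain N1 where N1: "N1 \<ge> n1" "\<And>n. n \<ge> N1 \<Longrightarrow> index (Lt n) (\<delta> n) = index (Lt N1) (\<delta> N1)"
    using nonincreasing_eventually_constant[of n1 "\<lambda>n. index (Lt n) (\<delta> n)"] by blast
  have "\<delta> n = \<delta> N1" if "n \<ge> N1" for n
    using that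
  proof (induction n rule: dec_induct)
    case (step n)
    have "index (Lt (Suc n)) (\<delta> (Suc n)) = index (Lt n) (\<delta> n)"
      using N1(2)[of n] N1(2)[of "Suc n"] step(1) by simp
    then show ?case using decreasing[of n] step N1(1) by simp
  qed simp
  then have "\<forall>n\<ge>N1. first_in (Lt n) (trace_stack n - G) (\<delta> N1)" using \<delta> N1(1) by (metis order.trans)
  then show ?thesis using N1(1) n1(1) by (meson order.trans)
qed

lemma stable_prefix_first_stays:
  assumes G: "stable_prefix G N" and "N1 \<ge> N" and d: "\<forall>n\<ge>N1. first_in (Lt n) (trace_stack n - G) d"
    and i: "i \<ge> p (T0 + N1)"
  shows "d \<in> set (ctrl (b i))"
proof -
  define u where "u = block_of p i"
  have u: "p u \<le> i" "i < p (Suc u)" using block_of_bounds[OF strict_mono_p] p0 unfolding u_def by auto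
  have "T0 + N1 \<le> u"
  proof (rule ccontr)
    assume "\<not> T0 + N1 \<le> u"
    then have "p (Suc u) \<le> p (T0 + N1)" using strict_mono_p by (simp add: strict_mono_less_eq)
    then show False using u i by simp
  qed
  then have n: "u = T0 + (u - T0)" "u - T0 \<ge> N1" by arith+
  then have "N \<le> u - T0" using \<open>N1 \<ge> N\<close> by simp
  from stable_prefix_first_present[OF G this d[rule_format, OF n(2)]] show ?thesis
    using u n(1) by simp
qed

lemma persistent_chip_eventually_uncovered:
  assumes "\<forall>i\<ge>I0. d \<in> set (ctrl (b i))"
  shows "\<exists>N. \<forall>n\<ge>N. \<not> covered d (Bt n)"
proof -
  have "finite {i. reset_step d (b i) (b (Suc i))}" using assms not_accepting unfolding accepting_def by blast
  then obtain I where I: "\<And>i. reset_step d (b i) (b (Suc i)) \<Longrightarrow> i < I"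
    using finite_nat_set_iff_bounded by auto
  have "\<not> covered d (Bt n)" if "n \<ge> I" for n
  proof
    assume "covered d (Bt n)"
    then obtain i where i: "p (T0 + n) \<le> i" "reset_step d (b i) (b (Suc i))"
      using covered_reset_in_block by blast
    have "n \<le> p (T0 + n)" using strict_mono_imp_increasing[OF strict_mono_p, of "T0 + n"] by simp
    moreover have "i < I" using I i(2) by blast
    ultimately show False using i(1) that by simp
  qed
  then show ?thesis by blast
qed

lemma stable_prefix_extends:
  assumes G: "stable_prefix G N"
  shows "\<exists>d N'. d \<notin> G \<and> stable_prefix (insert d G) N'"
proof -
  obtain d N1 where N1: "N1 \<ge> N" and d: "\<forall>n\<ge>N1. first_in (Lt n) (trace_stack n - G) d"
    using stable_prefix_first_eventually_constant[OF G] by blast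
  have "d \<notin> G" using d unfolding first_in_def by blast
  have "\<forall>i\<ge>p (T0 + N1). d \<in> set (ctrl (b i))" using stable_prefix_first_stays[OF G N1 d] by blast
  then obtain N2 where N2: "N2 \<ge> N1" "\<forall>n\<ge>N2. \<not> covered d (Bt n)"
    using persistent_chip_eventually_uncovered by (metis le_trans nat_le_linear)
  have "stable_prefix (insert d G) N2"
    unfolding stable_prefix_def
  proof (intro conjI allI impI)
    show "N2 \<ge> 1" using G N1 N2(1) unfolding stable_prefix_def by auto
    fix n assume n: "n \<ge> N2"
    then have "n \<ge> N" "n \<ge> N1" "n \<ge> 1" using N1 N2(1) G unfolding stable_prefix_def by auto
    note old = stable_prefix_at(3-5)[OF G \<open>n \<ge> N\<close>]
    have dn: "d \<in> trace_stack n - G" "\<forall>z\<in>trace_stack n - G. index (Lt n) d \<le> index (Lt n) z"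
      using d \<open>n \<ge> N1\<close> unfolding first_in_def by auto
    have "index (Lt n) d < index (Lt n) z" if z: "z \<in> trace_stack n - insert d G" for z
    proof -
      have "d \<in> set (Lt n)" "z \<in> set (Lt n)" "z \<noteq> d"
        using dn(1) z trace_stack_subset[OF \<open>n \<ge> 1\<close>] by auto
      then have "index (Lt n) d \<noteq> index (Lt n) z" using index_inj by metis
      moreover have "index (Lt n) d \<le> index (Lt n) z" using dn(2) z by blast
      ultimately show ?thesis by simp
    qed
    then show "\<forall>g\<in>insert d G. \<forall>z\<in>trace_stack n - insert d G. index (Lt n) g < index (Lt n) z"
      using old(3) by blast
    show "insert d G \<subseteq> trace_stack n" using old(1) dn(1) by blast
    show "\<forall>g\<in>insert d G. \<not> covered g (Bt n)" using old(2) N2(2) n by auto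
  qed
  then show ?thesis using \<open>d \<notin> G\<close> by blast
qed

lemma stable_prefix_of_card: "\<exists>G N. finite G \<and> card G = j \<and> stable_prefix G N"
proof (induction j)
  case 0
  have "stable_prefix {} 1" unfolding stable_prefix_def by simp
  then show ?case by (intro exI[of _ "{}"] exI[of _ 1]) simp
next
  case (Suc j)
  then obtain G N where G: "finite G" "card G = j" "stable_prefix G N" by blast
  then obtain d N' where "d \<notin> G" "stable_prefix (insert d G) N'" using stable_prefix_extends by blast
  then show ?case using G by (intro exI[of _ "insert d G"] exI[of _ N']) simp
qed

lemma pigeonhole_contradiction: False
proof -
  define K where "K = Max (card ` mdom ` M)"
  have K: "card (mdom (\<tau> i)) \<le> K" for i unfolding K_def using finite_M in_M by (simp add: Max_ge)
  obtain G N where G: "card G = K * card (UNIV :: 'a set) + 1" "stable_prefix G N"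
    using stable_prefix_of_card by blast
  have "N \<ge> 1" using G(2) by (simp add: stable_prefix_def)
  then obtain N' where N': "N = Suc N'" by (cases N) auto
  have "G \<subseteq> set (Lt N)" using stable_prefix_at(3)[OF G(2)] trace_stack_subset[OF \<open>N \<ge> 1\<close>] by auto
  moreover have "\<forall>g\<in>G. \<not> covered g (Bt N)" using stable_prefix_at(4)[OF G(2)] by simp
  moreover have "S = S'" if "S \<in> stk (Bt N) x a" "S' \<in> stk (Bt N) x a" for S S' x a
    using block_start_thin[of S "T0 + N'"] that N' by simp
  ultimately have "card G \<le> card (bset (Bt N)) * card (UNIV :: 'a set)"
    using single_stack_cells_uncovered_card boards by blast
  also have "\<dots> \<le> K * card (UNIV :: 'a set)" using K bset_block by simp
  finally show False using G(1) by simp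
qed

end

lemma greedy_blocks_accepting:
  fixes \<alpha> :: "'a::{finite,bounded_semilattice_sup_bot}"
  assumes "greedy_blocks \<alpha> \<tau> b p" and "finite M" "\<forall>i. \<tau> i \<in> M" and "trace_condition \<alpha> \<tau>"
  shows "accepting b"
proof (rule ccontr)
  assume "\<not> accepting b"
  obtain T0 V W where "V 0 \<in> mdom (\<tau> T0)" "\<forall>n. (V n, W n, V (Suc n)) \<in> mrel (\<tau> (T0 + n))"
    "\<forall>N. \<exists>n\<ge>N. sup (activation \<alpha> W n) (W n) = \<alpha>"
    using trace_condition_path[OF assms(4)] by blast
  then interpret rejecting_greedy_run \<alpha> \<tau> b p M T0 V W
    using assms \<open>\<not> accepting b\<close> by (simp add: rejecting_greedy_run_def rejecting_greedy_run_axioms_def)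
  show False by (rule pigeonhole_contradiction)
qed

section \<open>Existence of greedy runs\<close>

fun reset_chain :: "nat list \<Rightarrow> ('x,'a) board \<Rightarrow> nat \<Rightarrow> ('x,'a) board" where
  "reset_chain cs B 0 = B"
| "reset_chain cs B (Suc j) = reset_fun (cs ! j) (reset_chain cs B j)"

lemma reset_chain_board: "is_board B \<Longrightarrow> is_board (reset_chain cs B j) \<and> bset (reset_chain cs B j) = bset B"
  by (induction j) (auto simp: reset_fun_board reset_fun_simps)

lemma greedy_trans_exists:
  assumes B: "is_board B" "bset B = mdom \<tau>" and \<tau>: "is_morphism \<tau>"
  shows "\<exists>Bs. greedy_trans \<alpha> \<tau> B Bs"
proof -
  define cs where "cs = rev (filter (\<lambda>\<gamma>. covered \<gamma> B) (ctrl B))"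
  define B1 where "B1 = pop_fun (reset_chain cs B (length cs))"
  have "bset B1 = mdom \<tau>" using reset_chain_board[OF B(1)] B(2) unfolding B1_def by (simp add: pop_fun_simps)
  then obtain B2 where B2: "succ_step \<alpha> \<tau> B1 B2" using succ_step_exists[OF \<tau>] by blast
  define Bs where "Bs = map (reset_chain cs B) [0..<Suc (length cs)] @ [B1, B2, thin_fun B2]"
  have "j \<le> length cs \<Longrightarrow> Bs ! j = reset_chain cs B j" for j
    unfolding Bs_def by (simp add: nth_append del: upt_Suc)
  moreover have "Bs ! (length cs + 1) = B1" "Bs ! (length cs + 2) = B2" "Bs ! (length cs + 3) = thin_fun B2"
    unfolding Bs_def by (simp_all add: nth_append del: upt_Suc)
  ultimately have "greedy_trans \<alpha> \<tau> B Bs"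
    using B2 unfolding greedy_trans_def Let_def cs_def[symmetric] B1_def by (auto simp: Bs_def)
  then show ?thesis by blast
qed

locale greedy_construction =
  fixes \<alpha> :: "'a::bounded_semilattice_sup_bot" and \<tau> :: "nat \<Rightarrow> ('x,'a) mor"
  assumes alpha_ne_bot: "\<alpha> \<noteq> bot" and morphism: "\<forall>n. is_morphism (\<tau> n)" and path: "describes_path \<tau>"
begin

definition "greedy_choice B n = (SOME Bs. greedy_trans \<alpha> (\<tau> n) B Bs)"

primrec block_start :: "nat \<Rightarrow> ('x,'a) board" where
  "block_start 0 = empty_board (mdom (\<tau> 0))"
| "block_start (Suc n) = last (greedy_choice (block_start n) n)"

abbreviation "chosen n \<equiv> greedy_choice (block_start n) n"

lemma chosen_transition: "greedy_transition \<alpha> (\<tau> n) (block_start n) (chosen n)"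
proof -
  have "is_board (block_start n) \<and> bset (block_start n) = mdom (\<tau> n)"
  proof (induction n)
    case 0 show ?case using morphism by (simp add: is_board_def empty_board_def is_morphism_def)
  next
    case (Suc n)
    then have "greedy_trans \<alpha> (\<tau> n) (block_start n) (chosen n)"
      unfolding greedy_choice_def using greedy_trans_exists morphism by (metis someI_ex)
    then interpret g: greedy_transition \<alpha> "\<tau> n" "block_start n" "chosen n"
      using Suc alpha_ne_bot morphism by (simp add: greedy_transition_def)
    have "chosen n \<noteq> []" using g.greedy_steps(1) by auto
    then have "block_start (Suc n) = chosen n ! (g.k + 3)"
      using g.greedy_steps(1) by (simp add: last_conv_nth add.commute)
    then show ?case using g.thin_board(1) g.bset_last path by (simp add: describes_path_def)
  qed
  moreover have "greedy_trans \<alpha> (\<tau> n) (block_start n) (chosen n)"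
    unfolding greedy_choice_def using calculation greedy_trans_exists morphism by (metis someI_ex)
  ultimately show ?thesis using alpha_ne_bot morphism by (simp add: greedy_transition_def)
qed

abbreviation "nres n \<equiv> greedy_transition.k (block_start n)"

lemma length_chosen: "length (chosen n) = nres n + 4"
proof -
  interpret g: greedy_transition \<alpha> "\<tau> n" "block_start n" "chosen n" by (rule chosen_transition)
  show ?thesis using g.greedy_steps(1) .
qed

primrec p :: "nat \<Rightarrow> nat" where
  "p 0 = 0"
| "p (Suc n) = p n + nres n + 3"

lemma strict_mono_p: "strict_mono p" unfolding strict_mono_Suc_iff by simp

definition "run i = chosen (block_of p i) ! (i - p (block_of p i))"

lemma run_in_block:
  assumes "p n \<le> i" "i \<le> p (Suc n)"
  shows "run i = chosen n ! (i - p n)"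
proof (cases "i < p (Suc n)")
  case True
  then have "block_of p i = n" using block_of_eq[OF strict_mono_p] assms by blast
  then show ?thesis unfolding run_def by simp
next
  case False
  then have i: "i = p (Suc n)" using assms by simp
  then have "block_of p i = Suc n" using block_of_eq[OF strict_mono_p, of "Suc n" i] strict_mono_p
    by (simp add: strict_mono_def)
  then have "run i = chosen (Suc n) ! 0" unfolding run_def using i by simp
  also have "\<dots> = block_start (Suc n)"
  proof -
    interpret g: greedy_transition \<alpha> "\<tau> (Suc n)" "block_start (Suc n)" "chosen (Suc n)"
      by (rule chosen_transition)
    show ?thesis using g.greedy_steps(2) .
  qed
  also have "\<dots> = chosen n ! (nres n + 3)"
  proof -
    have "chosen n \<noteq> []" using length_chosen[of n] by auto
    then show ?thesis using length_chosen[of n] by (simp add: last_conv_nth add.commute)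
  qed
  finally show ?thesis using i by simp
qed

lemma map_run_block: "map run [p n..<Suc (p (Suc n))] = chosen n"
proof (rule nth_equalityI)
  show "length (map run [p n..<Suc (p (Suc n))]) = length (chosen n)" using length_chosen by simp
  fix j assume "j < length (map run [p n..<Suc (p (Suc n))])"
  then have "j \<le> nres n + 3" by simp
  then show "map run [p n..<Suc (p (Suc n))] ! j = chosen n ! j"
    using run_in_block[of n "p n + j"] by (simp add: nth_map_upt del: upt_Suc)
qed

lemma run_block_start: "run (p n) = block_start n"
  using run_in_block[of n "p n"] chosen_transition[of n] by (simp add: greedy_transition_def greedy_trans_def Let_def)

lemma locate_in_block: "p (block_of p i) \<le> i \<and> i < p (Suc (block_of p i))"
  using block_of_bounds[OF strict_mono_p] by simp

lemma run_boards: "is_board (run i)"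
proof -
  interpret g: greedy_transition \<alpha> "\<tau> (block_of p i)" "block_start (block_of p i)" "chosen (block_of p i)"
    by (rule chosen_transition)
  have "i < p (block_of p i) + nres (block_of p i) + 3" using locate_in_block[of i] by simp
  then have "i - p (block_of p i) < length (chosen (block_of p i))" using length_chosen by simp
  then show ?thesis using g.boards run_def by simp
qed

definition "succ_index n = p (Suc n) - 2"

lemma run_succ_steps: "succ_step \<alpha> (\<tau> n) (run (succ_index n)) (run (Suc (succ_index n)))"
proof -
  interpret g: greedy_transition \<alpha> "\<tau> n" "block_start n" "chosen n" by (rule chosen_transition)
  have "run (succ_index n) = chosen n ! (g.k + 1)" "run (Suc (succ_index n)) = chosen n ! (g.k + 2)"
    using run_in_block[of n "succ_index n"] run_in_block[of n "Suc (succ_index n)"] unfolding succ_index_def by (simp_all add: numeral_eq_Suc)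
  then show ?thesis using g.greedy_steps(5) by simp
qed

lemma run_other_steps:
  assumes "i \<notin> range succ_index"
  shows "weak_step (run i) (run (Suc i)) \<or> pop_step (run i) (run (Suc i)) \<or>
    (\<exists>\<gamma>\<in>set (ctrl (run i)). reset_step \<gamma> (run i) (run (Suc i)))"
proof -
  define n where "n = block_of p i"
  interpret g: greedy_transition \<alpha> "\<tau> n" "block_start n" "chosen n" by (rule chosen_transition)
  define j where "j = i - p n"
  have i: "p n \<le> i" "i < p (Suc n)" using locate_in_block unfolding n_def by blast+
  have run_j: "run i = chosen n ! j" "run (Suc i) = chosen n ! Suc j"
    using run_in_block[of n i] run_in_block[of n "Suc i"] i unfolding j_def by (simp_all add: Suc_diff_le)
  have "j \<noteq> g.k + 1"
  proof
    assume "j = g.k + 1"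
    then have "i = succ_index n" using i unfolding j_def succ_index_def by simp
    then show False using assms by simp
  qed
  moreover have "j \<le> g.k + 2" using i unfolding j_def by simp
  ultimately consider "j < g.k" | "j = g.k" | "j = g.k + 2" by linarith
  then show ?thesis
  proof cases
    case 1
    then have "reset_step (g.resets ! j) (run i) (run (Suc i))" using g.reset_phase_steps run_j by simp
    then show ?thesis unfolding reset_step_def covered_def by blast
  next
    case 2 then show ?thesis using g.pop_board(2) run_j by simp
  next
    case 3 then show ?thesis using g.thin_board(2) run_j by (simp add: numeral_eq_Suc)
  qed
qed

lemma run_is_greedy_run: "greedy_run \<alpha> \<tau> run succ_index"
proof -
  have "strict_mono succ_index" unfolding strict_mono_Suc_iff succ_index_def by simp
  then have "is_run \<alpha> \<tau> run succ_index" unfolding is_run_def using run_boards run_succ_steps run_other_steps by blast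
  moreover have "greedy_trans \<alpha> (\<tau> n) (run (p n)) (map run [p n..<Suc (p (Suc n))])" for n
    using chosen_transition[of n] map_run_block run_block_start by (simp add: greedy_transition_def)
  moreover have "run 0 = empty_board (mdom (\<tau> 0))" using run_block_start[of 0] by simp
  ultimately show ?thesis unfolding greedy_run_def succ_index_def by (intro conjI exI[of _ p]) auto
qed

end

lemma greedy_run_blocks:
  assumes "greedy_run \<alpha> \<tau> b \<iota>" "\<alpha> \<noteq> bot" "\<forall>n. is_morphism (\<tau> n)" "describes_path \<tau>"
  shows "\<exists>p. greedy_blocks \<alpha> \<tau> b p"
  using assms unfolding greedy_run_def is_run_def greedy_blocks_def by blast

theorem mainTheorem2:
  fixes \<alpha> :: "'a::{finite, bounded_semilattice_sup_bot}"
    and M :: "('x,'a) mor set"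
    and \<tau> :: "nat \<Rightarrow> ('x,'a) mor"
  assumes "\<alpha> \<noteq> bot"
    and "finite M"
    and "\<forall>R\<in>M. is_morphism R"
    and "\<forall>i. \<tau> i \<in> M"
    and "describes_path \<tau>"
    and "trace_condition \<alpha> \<tau>"
  shows "(\<exists>b \<iota>. greedy_run \<alpha> \<tau> b \<iota>) \<and> (\<forall>b \<iota>. greedy_run \<alpha> \<tau> b \<iota> \<longrightarrow> accepting b)"
proof
  have morphism: "\<forall>n. is_morphism (\<tau> n)" using assms(3,4) by blast
  interpret c: greedy_construction \<alpha> \<tau> using assms(1,5) morphism by unfold_locales
  show "\<exists>b \<iota>. greedy_run \<alpha> \<tau> b \<iota>" using c.run_is_greedy_run by blast
  show "\<forall>b \<iota>. greedy_run \<alpha> \<tau> b \<iota> \<longrightarrow> accepting b"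
  proof (intro allI impI)
    fix b \<iota> assume "greedy_run \<alpha> \<tau> b \<iota>"
    then obtain p where "greedy_blocks \<alpha> \<tau> b p" using greedy_run_blocks assms(1,5) morphism by blast
    then show "accepting b" using greedy_blocks_accepting assms(2,4,6) by blast
  qed
qed

end
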